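(* Let $n \ge 4$ be an integer with $n \ne 6$, and let $\rho$ be an integer with $1 \le \rho \le n$. Then there exists a $(3n+\rho,4)$-packing with exactly $n\rho + D(\rho,4)$ blocks in which the largest partial parallel class has size $\rho$.
   Context: For integers $v \ge k \ge 2$, a $(v,k)$-packing is a pair $(X,\mathcal{B})$ where $X$ is a set of $v$ points and $\mathcal{B}$ is a set of $k$-subsets of $X$ (blocks) such that every pair of distinct points lies in at most one block. For integers $m \ge 0$, $D(m,k)$ denotes the maximum number of $k$-subsets of an $m$-set such that every pair of points lies in at most one of them (so $D(m,k)=0$ if $m<k$). A partial parallel class (PPC) is a set of pairwise disjoint blocks; its size is the number of blocks. "The largest PPC has size $\rho$" means the packing has a PPC of size $\rho$ but none of size $\rho+1$. *)

theory Defs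
  imports Main
begin

definition is_packing :: "nat \<Rightarrow> nat \<Rightarrow> 'a set \<Rightarrow> 'a set set \<Rightarrow> bool" where
  "is_packing v k X \<B> \<longleftrightarrow>
     finite X \<and> card X = v \<and>
     (\<forall>B\<in>\<B>. B \<subseteq> X \<and> card B = k) \<and>
     (\<forall>x\<in>X. \<forall>y\<in>X. x \<noteq> y \<longrightarrow> card {B\<in>\<B>. x \<in> B \<and> y \<in> B} \<le> 1)"

definition D :: "nat \<Rightarrow> nat \<Rightarrow> nat" where
  "D m k = Max {card \<B> | \<B>. is_packing m k {0..<m} (\<B> :: nat set set)}"

definition is_PPC :: "'a set set \<Rightarrow> 'a set set \<Rightarrow> bool" where
  "is_PPC \<B> P \<longleftrightarrow> P \<subseteq> \<B> \<and> (\<forall>B\<in>P. \<forall>C\<in>P. B \<noteq> C \<longrightarrow> B \<inter> C = {})"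

definition largest_PPC_size :: "'a set set \<Rightarrow> nat \<Rightarrow> bool" where
  "largest_PPC_size \<B> \<rho> \<longleftrightarrow>
     (\<exists>P. is_PPC \<B> P \<and> card P = \<rho>) \<and> \<not> (\<exists>P. is_PPC \<B> P \<and> card P = \<rho> + 1)"

end

theory Submission
  imports Defs "HOL-Computational_Algebra.Primes"
begin

locale resolvable_triples =
  fixes Y :: "'a set" and C :: "nat \<Rightarrow> 'a set set" and S :: "nat \<Rightarrow> 'a set" and n :: nat
  assumes finite_points: "finite Y"
    and card_points: "card Y = 3 * n"
    and triple_subset: "i < n \<Longrightarrow> T \<in> C i \<Longrightarrow> T \<subseteq> Y"
    and card_triple: "i < n \<Longrightarrow> T \<in> C i \<Longrightarrow> card T = 3"
    and class_cover: "i < n \<Longrightarrow> \<Union>(C i) = Y"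
    and class_disjoint: "i < n \<Longrightarrow> T \<in> C i \<Longrightarrow> T' \<in> C i \<Longrightarrow> T \<noteq> T' \<Longrightarrow> T \<inter> T' = {}"
    and triples_meet: "i < n \<Longrightarrow> j < n \<Longrightarrow> T \<in> C i \<Longrightarrow> T' \<in> C j \<Longrightarrow> (i, T) \<noteq> (j, T') \<Longrightarrow>
      card (T \<inter> T') \<le> 1"
    and transversal_in_class: "i < n \<Longrightarrow> S i \<in> C i"
    and transversal_disjoint: "i < n \<Longrightarrow> j < n \<Longrightarrow> i \<noteq> j \<Longrightarrow> S i \<inter> S j = {}"
begin

lemma finite_triple: "i < n \<Longrightarrow> T \<in> C i \<Longrightarrow> finite T"
  using finite_subset[OF triple_subset finite_points] .

lemma finite_class: "i < n \<Longrightarrow> finite (C i)"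
  using triple_subset finite_points by (meson Pow_iff finite_Pow_iff finite_subset subsetI)

lemma card_class:
  assumes "i < n"
  shows "card (C i) = n"
proof -
  have "finite (C i)"
    using assms by (rule finite_class)
  then have "card Y = (\<Sum>T\<in>C i. card T)"
    using assms class_cover[symmetric] class_disjoint finite_triple
    by (simp add: card_Union_disjoint pairwise_def disjnt_def)
  then show ?thesis
    using assms card_triple card_points by simp
qed

lemma image:
  assumes h: "bij_betw h Y Z"
  shows "resolvable_triples Z (\<lambda>i. (`) h ` C i) (\<lambda>i. h ` S i) n"
proof -
  have inj: "inj_on h Y" and Z: "Z = h ` Y"
    using h by (auto simp: bij_betw_def)
  have image_Int: "h ` T \<inter> h ` T' = h ` (T \<inter> T')" if "i < n" "T \<in> C i" "j < n" "T' \<in> C j" for i j T T'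
    using inj_on_image_Int[OF inj] triple_subset that by metis
  have card_image_triple: "card (h ` T) = card T" if "i < n" "T \<in> C i" for i T
    using card_image inj_on_subset[OF inj triple_subset[OF that]] by blast
  show ?thesis
  proof
    show "finite Z" "card Z = 3 * n"
      using Z finite_points card_points card_image[OF inj] by auto
    show "\<Union>((`) h ` C i) = Z" if "i < n" for i
      using class_cover[OF that] Z by auto
  next
    fix i T' assume "i < n" "T' \<in> (`) h ` C i"
    then obtain T where "T \<in> C i" "T' = h ` T" by blast
    then show "T' \<subseteq> Z" "card T' = 3"
      using \<open>i < n\<close> Z triple_subset card_triple card_image_triple by auto
  next
    fix i T1 T2 assume i: "i < n" and T: "T1 \<in> (`) h ` C i" "T2 \<in> (`) h ` C i" "T1 \<noteq> T2"
    then obtain U1 U2 where U: "U1 \<in> C i" "U2 \<in> C i" "T1 = h ` U1" "T2 = h ` U2" by blast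
    then have "U1 \<inter> U2 = {}"
      using i T(3) class_disjoint by blast
    then show "T1 \<inter> T2 = {}"
      using i U image_Int by simp
  next
    fix i j T1 T2 assume ij: "i < n" "j < n" "T1 \<in> (`) h ` C i" "T2 \<in> (`) h ` C j" "(i, T1) \<noteq> (j, T2)"
    then obtain U1 U2 where U: "U1 \<in> C i" "U2 \<in> C j" "T1 = h ` U1" "T2 = h ` U2" by blast
    have "T1 \<inter> T2 = h ` (U1 \<inter> U2)"
      using image_Int[OF ij(1) U(1) ij(2) U(2)] U(3,4) by simp
    then have "card (T1 \<inter> T2) \<le> card (U1 \<inter> U2)"
      using finite_triple[OF ij(1) U(1)] by (simp add: card_image_le)
    also have "\<dots> \<le> 1"
      using ij(5) U triples_meet[OF ij(1,2) U(1,2)] by auto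
    finally show "card (T1 \<inter> T2) \<le> 1" .
  next
    show "h ` S i \<in> (`) h ` C i" if "i < n" for i
      using transversal_in_class[OF that] by blast
    show "h ` S i \<inter> h ` S j = {}" if "i < n" "j < n" "i \<noteq> j" for i j
      using image_Int transversal_in_class transversal_disjoint that by (metis image_empty)
  qed
qed

end

definition resolvable_triples_exist :: "nat \<Rightarrow> bool" where
  "resolvable_triples_exist n \<longleftrightarrow> (\<exists>(Y :: nat set) C S. resolvable_triples Y C S n)"

lemma resolvable_triples_on:
  assumes "resolvable_triples_exist n" "finite Z" "card Z = 3 * n"
  shows "\<exists>C S. resolvable_triples Z C S n"
proof -
  obtain Y :: "nat set" and C S where "resolvable_triples Y C S n"
    using assms(1) unfolding resolvable_triples_exist_def by blast
  moreover obtain h where "bij_betw h Y Z"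
    using finite_same_card_bij assms(2,3) calculation resolvable_triples.finite_points
      resolvable_triples.card_points by metis
  ultimately show ?thesis
    using resolvable_triples.image by blast
qed

lemma resolvable_triples_existI:
  assumes "resolvable_triples Y C S n"
  shows "resolvable_triples_exist n"
proof -
  have "finite {..<3 * n}" "card {..<3 * n} = 3 * n" by simp_all
  then obtain h where "bij_betw h Y {..<3 * n}"
    using finite_same_card_bij assms resolvable_triples.finite_points resolvable_triples.card_points
    by metis
  then show ?thesis
    using resolvable_triples.image[OF assms] unfolding resolvable_triples_exist_def by blast
qed

lemma is_packing_iff_blocks_meet:
  "is_packing v k X \<B> \<longleftrightarrow> finite X \<and> card X = v \<and> (\<forall>B\<in>\<B>. B \<subseteq> X \<and> card B = k) \<and>
     (\<forall>B\<in>\<B>. \<forall>B'\<in>\<B>. B \<noteq> B' \<longrightarrow> card (B \<inter> B') \<le> 1)"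
proof -
  have "(\<forall>x\<in>X. \<forall>y\<in>X. x \<noteq> y \<longrightarrow> card {B \<in> \<B>. x \<in> B \<and> y \<in> B} \<le> 1) \<longleftrightarrow>
      (\<forall>B\<in>\<B>. \<forall>B'\<in>\<B>. B \<noteq> B' \<longrightarrow> card (B \<inter> B') \<le> 1)"
    if X: "finite X" "\<forall>B\<in>\<B>. B \<subseteq> X"
  proof -
    have "finite \<B>"
      using X by (meson Pow_iff finite_Pow_iff finite_subset subsetI)
    moreover have "finite (B \<inter> B')" if "B \<in> \<B>" for B B'
      using X that by (meson finite_Int finite_subset)
    ultimately show ?thesis
      using X by (auto simp: card_le_Suc0_iff_eq) blast+
  qed
  then show ?thesis
    unfolding is_packing_def by blast
qed

lemma card_PPC_le:
  assumes "finite R" "\<And>B. B \<in> \<B> \<Longrightarrow> B \<inter> R \<noteq> {}" "is_PPC \<B> P"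
  shows "card P \<le> card R"
proof -
  define pick where "pick B = (SOME x. x \<in> B \<inter> R)" for B
  have pick: "pick B \<in> B \<inter> R" if "B \<in> P" for B
  proof -
    have "B \<inter> R \<noteq> {}"
      using assms(2,3) that unfolding is_PPC_def by blast
    then show ?thesis
      unfolding pick_def by (rule some_in_eq[THEN iffD2])
  qed
  have "inj_on pick P"
  proof (rule inj_onI)
    fix B B' assume "B \<in> P" "B' \<in> P" "pick B = pick B'"
    then have "pick B \<in> B \<inter> B'"
      using pick[of B] pick[of B'] by auto
    then show "B = B'"
      using \<open>B \<in> P\<close> \<open>B' \<in> P\<close> assms(3) unfolding is_PPC_def by auto
  qed
  moreover have "pick ` P \<subseteq> R"
    using pick by blast
  ultimately show ?thesis
    using assms(1) card_inj_on_le by blast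
qed

lemma maximum_packing_exists: "\<exists>P. is_packing m k {0..<m} P \<and> card P = D m k"
proof -
  let ?sizes = "{card P | P. is_packing m k {0..<m} (P :: nat set set)}"
  have "?sizes \<subseteq> card ` Pow (Pow {0..<m})"
    unfolding is_packing_def by blast
  then have "finite ?sizes"
    by (rule finite_subset) simp
  moreover have "is_packing m k {0..<m} {}"
    unfolding is_packing_def by simp
  ultimately have "Max ?sizes \<in> ?sizes"
    using Max_in by blast
  then show ?thesis
    unfolding D_def by auto
qed
locale packing_extension = resolvable_triples Y C S n for Y :: "nat set" and C S n +
  fixes r :: nat and P :: "nat set set"
  assumes r_le_n: "r \<le> n"
    and points_disjoint: "Y \<inter> {..<r} = {}"
    and packing_P: "is_packing r 4 {..<r} P"
begin

lemma lt_n: "i < r \<Longrightarrow> i < n"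
  using r_le_n by simp

definition extension_blocks :: "nat set set" where
  "extension_blocks = (\<lambda>(i, T). insert i T) ` Sigma {..<r} C"

lemma extension_blockE:
  assumes "B \<in> extension_blocks"
  obtains i T where "i < r" "T \<in> C i" "B = insert i T"
  using assms unfolding extension_blocks_def by auto

lemma triple_Int_new_points:
  assumes "i < r" "T \<in> C i"
  shows "T \<inter> {..<r} = {}"
proof -
  have "T \<subseteq> Y"
    using assms lt_n triple_subset by blast
  then show ?thesis
    using points_disjoint by blast
qed

lemma P_block: "B \<in> P \<Longrightarrow> B \<subseteq> {..<r} \<and> card B = 4"
  using packing_P unfolding is_packing_def by blast

lemma extension_block_Int_new_points: "i < r \<Longrightarrow> T \<in> C i \<Longrightarrow> insert i T \<inter> {..<r} = {i}"
  using triple_Int_new_points by auto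

lemma card_extension_block:
  assumes "i < r" "T \<in> C i"
  shows "card (insert i T) = 4"
proof -
  have "i \<notin> T" "card T = 3" "finite T"
    using assms triple_Int_new_points card_triple[OF lt_n] finite_triple[OF lt_n] by auto
  then show ?thesis by simp
qed

lemma extension_blocks_meet:
  assumes "i < r" "T \<in> C i" "j < r" "T' \<in> C j" "insert i T \<noteq> insert j T'"
  shows "card (insert i T \<inter> insert j T') \<le> 1"
proof (cases "i = j")
  case True
  then have "T \<noteq> T'"
    using assms(5) by blast
  then have "T \<inter> T' = {}"
    using assms True class_disjoint lt_n by blast
  then have "insert i T \<inter> insert j T' = {i}"
    using True by auto
  then show ?thesis by simp
next
  case False
  moreover have "i \<notin> T'" "j \<notin> T"
    using assms triple_Int_new_points by auto
  ultimately have "insert i T \<inter> insert j T' = T \<inter> T'"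
    by auto
  then show ?thesis
    using False triples_meet[OF lt_n lt_n] assms by simp
qed

lemma P_meets_extension_block:
  assumes "B \<in> P" "i < r" "T \<in> C i"
  shows "card (B \<inter> insert i T) \<le> 1"
proof -
  have "B \<inter> insert i T \<subseteq> {i}"
    using assms P_block triple_Int_new_points by blast
  then show ?thesis
    using subset_singletonD by fastforce
qed

lemma is_packing_extension: "is_packing (3 * n + r) 4 ({..<r} \<union> Y) (P \<union> extension_blocks)"
proof -
  have "finite ({..<r} \<union> Y)" "card ({..<r} \<union> Y) = 3 * n + r"
    using finite_points card_points points_disjoint by (simp_all add: card_Un_disjoint Int_commute)
  moreover have "B \<subseteq> {..<r} \<union> Y \<and> card B = 4" if "B \<in> P \<union> extension_blocks" for B
    using that
  proof
    assume "B \<in> P"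
    then show ?thesis
      using P_block by blast
  next
    assume "B \<in> extension_blocks"
    then obtain i T where "i < r" "T \<in> C i" "B = insert i T"
      by (rule extension_blockE)
    then show ?thesis
      using card_extension_block triple_subset[OF lt_n] by blast
  qed
  moreover have meet_extension_block: "card (B \<inter> insert i T) \<le> 1"
    if "B \<in> P \<union> extension_blocks" "i < r" "T \<in> C i" "B \<noteq> insert i T" for B i T
    using that(1)
  proof
    assume "B \<in> P"
    then show ?thesis
      using P_meets_extension_block that by blast
  next
    assume "B \<in> extension_blocks"
    then show ?thesis
      using extension_blocks_meet that by (metis extension_blockE)
  qed
  moreover have "card (B \<inter> B') \<le> 1"
    if B: "B \<in> P \<union> extension_blocks" "B' \<in> P \<union> extension_blocks" "B \<noteq> B'" for B B'
  proof (cases "B \<in> P \<and> B' \<in> P")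
    case True
    then show ?thesis
      using packing_P B(3) unfolding is_packing_iff_blocks_meet by blast
  next
    case False
    then consider "B' \<in> extension_blocks" | "B \<in> extension_blocks"
      using B by blast
    then show ?thesis
    proof cases
      case 1
      then show ?thesis
        using meet_extension_block B by (metis extension_blockE)
    next
      case 2
      then show ?thesis
        using meet_extension_block B by (metis extension_blockE Int_commute)
    qed
  qed
  ultimately show ?thesis
    unfolding is_packing_iff_blocks_meet by blast
qed

lemma card_extension_blocks: "card extension_blocks = n * r"
proof -
  have "inj_on (\<lambda>(i, T). insert i T) (Sigma {..<r} C)"
  proof (rule inj_onI, clarify)
    fix i T j T' assume *: "i < r" "T \<in> C i" "j < r" "T' \<in> C j" "insert i T = insert j T'"
    then have "i = j"
      using extension_block_Int_new_points by (metis singleton_inject)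
    moreover have "i \<notin> T" "j \<notin> T'"
      using * triple_Int_new_points by auto
    ultimately show "i = j \<and> T = T'"
      using *(5) by (metis insert_ident)
  qed
  then have "card extension_blocks = card (Sigma {..<r} C)"
    unfolding extension_blocks_def by (rule card_image)
  also have "\<dots> = (\<Sum>i<r. card (C i))"
    using finite_class lt_n by (intro card_SigmaI) auto
  also have "\<dots> = n * r"
    using card_class lt_n by simp
  finally show ?thesis .
qed

lemma card_extension: "card (P \<union> extension_blocks) = n * r + card P"
proof -
  have "finite P"
    using packing_P unfolding is_packing_def by (meson Pow_iff finite_Pow_iff finite_lessThan finite_subset subsetI)
  moreover have "finite extension_blocks"
    unfolding extension_blocks_def using finite_class lt_n by auto
  moreover have "P \<inter> extension_blocks = {}"
  proof (rule ccontr)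
    assume "P \<inter> extension_blocks \<noteq> {}"
    then obtain B where "B \<in> P" "B \<in> extension_blocks"
      by blast
    then obtain i T where "insert i T \<in> P" "i < r" "T \<in> C i"
      by (metis extension_blockE)
    then have "T = {}"
      using P_block triple_Int_new_points by blast
    then show False
      using \<open>i < r\<close> \<open>T \<in> C i\<close> card_triple[OF lt_n] by fastforce
  qed
  ultimately show ?thesis
    using card_extension_blocks by (simp add: card_Un_disjoint)
qed

lemma largest_PPC_extension: "largest_PPC_size (P \<union> extension_blocks) r"
  unfolding largest_PPC_size_def
proof
  let ?T = "(\<lambda>i. insert i (S i)) ` {..<r}"
  have "?T \<subseteq> extension_blocks"
    unfolding extension_blocks_def using transversal_in_class lt_n by blast
  moreover have "insert i (S i) \<inter> insert j (S j) = {}" if "i < r" "j < r" "i \<noteq> j" for i j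
    using that transversal_disjoint[OF lt_n lt_n] transversal_in_class[OF lt_n]
      triple_Int_new_points by blast
  ultimately have "is_PPC (P \<union> extension_blocks) ?T"
    unfolding is_PPC_def by blast
  moreover have "inj_on (\<lambda>i. insert i (S i)) {..<r}"
  proof (rule inj_onI)
    fix i j assume "i \<in> {..<r}" "j \<in> {..<r}" "insert i (S i) = insert j (S j)"
    then show "i = j"
      using extension_block_Int_new_points transversal_in_class[OF lt_n]
      by (metis lessThan_iff singleton_inject)
  qed
  then have "card ?T = r"
    by (simp add: card_image)
  ultimately show "\<exists>Q. is_PPC (P \<union> extension_blocks) Q \<and> card Q = r"
    by blast
next
  have "B \<inter> {..<r} \<noteq> {}" if "B \<in> P \<union> extension_blocks" for B
    using that
  proof
    assume "B \<in> P"
    then have "B \<subseteq> {..<r}" "B \<noteq> {}"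
      using P_block by fastforce+
    then show ?thesis by blast
  next
    assume "B \<in> extension_blocks"
    then show ?thesis
      by (auto elim!: extension_blockE)
  qed
  then have "card Q \<le> r" if "is_PPC (P \<union> extension_blocks) Q" for Q
    using card_PPC_le[OF finite_lessThan _ that] by simp
  then show "\<not> (\<exists>Q. is_PPC (P \<union> extension_blocks) Q \<and> card Q = r + 1)"
    by fastforce
qed

end

type_synonym point = "int \<times> int \<times> int"

definition cyclic_points :: "int \<Rightarrow> int \<Rightarrow> point set" where
  "cyclic_points k m = {0..<k} \<times> {0..<m} \<times> {0..<3}"

definition translate :: "int \<Rightarrow> int \<Rightarrow> int \<times> int \<Rightarrow> point \<Rightarrow> point" where
  "translate k m g p = (case p of (a, b, j) \<Rightarrow> ((a + fst g) mod k, (b + snd g) mod m, j))"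

definition difference :: "int \<Rightarrow> int \<Rightarrow> point \<Rightarrow> point \<Rightarrow> int \<times> int \<times> int \<times> int" where
  "difference k m p q =
     (case (p, q) of ((a, b, j), (a', b', j')) \<Rightarrow> (j, j', (a' - a) mod k, (b' - b) mod m))"

definition level :: "point \<Rightarrow> int" where
  "level p = snd (snd p)"

lemma mod_add_right_cancel: "((a :: int) + c) mod k = (b + c) mod k \<longleftrightarrow> a mod k = b mod k"
  by (simp add: mod_eq_dvd_iff)

lemma finite_cyclic_points: "finite (cyclic_points k m)"
  unfolding cyclic_points_def by simp

lemma card_cyclic_points: "k > 0 \<Longrightarrow> m > 0 \<Longrightarrow> card (cyclic_points k m) = 3 * nat (k * m)"
  unfolding cyclic_points_def by (simp add: card_cartesian_product nat_mult_distrib)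

lemma level_translate [simp]: "level (translate k m g p) = level p"
  unfolding level_def translate_def by (cases p) auto

lemma translate_in_cyclic_points:
  "p \<in> cyclic_points k m \<Longrightarrow> k > 0 \<Longrightarrow> m > 0 \<Longrightarrow> translate k m g p \<in> cyclic_points k m"
  unfolding cyclic_points_def translate_def by (cases p) auto

lemma inj_on_translate: "inj_on (translate k m g) (cyclic_points k m)"
proof (rule inj_onI)
  fix p q assume "p \<in> cyclic_points k m" "q \<in> cyclic_points k m" "translate k m g p = translate k m g q"
  moreover obtain a b j a' b' j' where "p = (a, b, j)" "q = (a', b', j')"
    by (cases p, cases q) auto
  ultimately have "a mod k = a' mod k" "b mod m = b' mod m" "j = j'"
    and "0 \<le> a" "a < k" "0 \<le> b" "b < m" "0 \<le> a'" "a' < k" "0 \<le> b'" "b' < m"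
    unfolding cyclic_points_def translate_def by (auto simp: mod_add_right_cancel)
  then show "p = q"
    using \<open>p = (a, b, j)\<close> \<open>q = (a', b', j')\<close> by simp
qed

lemma translate_cyclic_points:
  assumes "k > 0" "m > 0"
  shows "translate k m g ` cyclic_points k m = cyclic_points k m"
  using endo_inj_surj[OF finite_cyclic_points _ inj_on_translate] translate_in_cyclic_points assms
  by blast

lemma difference_translate [simp]:
  "difference k m (translate k m g p) (translate k m g q) = difference k m p q"
proof -
  obtain a b j a' b' j' where "p = (a, b, j)" "q = (a', b', j')"
    by (cases p, cases q) auto
  moreover have "((a' + fst g) mod k - (a + fst g) mod k) mod k = (a' - a) mod k"
    "((b' + snd g) mod m - (b + snd g) mod m) mod m = (b' - b) mod m"
    by (simp_all add: mod_diff_eq)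
  ultimately show ?thesis
    unfolding difference_def translate_def by simp
qed

lemma translate_eq_translate_imp_eq:
  assumes "translate k m g p = translate k m g' p"
    and "g \<in> {0..<k} \<times> {0..<m}" "g' \<in> {0..<k} \<times> {0..<m}"
  shows "g = g'"
proof -
  obtain a b j where "p = (a, b, j)"
    by (cases p) auto
  then have "(fst g + a) mod k = (fst g' + a) mod k" "(snd g + b) mod m = (snd g' + b) mod m"
    using assms(1) unfolding translate_def by (simp_all add: add.commute)
  then have "fst g mod k = fst g' mod k" "snd g mod m = snd g' mod m"
    by (simp_all add: mod_add_right_cancel)
  then show ?thesis
    using assms(2,3) by (auto simp: prod_eq_iff)
qed

definition group_elem :: "int \<Rightarrow> nat \<Rightarrow> int \<times> int" where
  "group_elem m c = (int c div m, int c mod m)"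

lemma group_elem_in:
  assumes "k > 0" "m > 0" "c < nat (k * m)"
  shows "group_elem m c \<in> {0..<k} \<times> {0..<m}"
proof -
  have "int c < k * m"
    using assms by linarith
  then have "int c div m < k"
    using assms(2) by (smt (verit) minus_div_mult_eq_mod mult_right_less_imp_less pos_mod_sign)
  then show ?thesis
    unfolding group_elem_def using assms(2) by (simp add: pos_imp_zdiv_nonneg_iff)
qed

lemma inj_group_elem: "m > 0 \<Longrightarrow> inj (group_elem m)"
  unfolding group_elem_def by (rule injI) (metis div_mult_mod_eq of_nat_eq_iff prod.inject)

locale starter =
  fixes k m :: int and I :: "'i set" and base :: "'i \<Rightarrow> nat \<Rightarrow> point" and i0 :: 'i
  assumes k_pos: "k > 0" and m_pos: "m > 0"
    and finite_I: "finite I" and card_I: "card I = nat (k * m)"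
    and base_in: "i \<in> I \<Longrightarrow> s < 3 \<Longrightarrow> base i s \<in> cyclic_points k m"
    and base_inj: "i \<in> I \<Longrightarrow> i' \<in> I \<Longrightarrow> s < 3 \<Longrightarrow> s' < 3 \<Longrightarrow> base i s = base i' s' \<Longrightarrow>
      i = i' \<and> s = s'"
    and difference_inj: "i \<in> I \<Longrightarrow> i' \<in> I \<Longrightarrow> s < 3 \<Longrightarrow> t < 3 \<Longrightarrow> s' < 3 \<Longrightarrow> t' < 3 \<Longrightarrow>
      s \<noteq> t \<Longrightarrow> s' \<noteq> t' \<Longrightarrow> difference k m (base i s) (base i t) = difference k m (base i' s') (base i' t') \<Longrightarrow>
      i = i' \<and> s = s' \<and> t = t'"
    and i0_in: "i0 \<in> I"
    and i0_levels: "s < 3 \<Longrightarrow> t < 3 \<Longrightarrow> level (base i0 s) = level (base i0 t) \<Longrightarrow> s = t"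
begin

definition base_triple :: "'i \<Rightarrow> point set" where
  "base_triple i = base i ` {..<3}"

abbreviation shift :: "nat \<Rightarrow> point \<Rightarrow> point" where
  "shift c \<equiv> translate k m (group_elem m c)"

definition developed_class :: "nat \<Rightarrow> point set set" where
  "developed_class c = (\<lambda>i. shift c ` base_triple i) ` I"

definition developed_transversal :: "nat \<Rightarrow> point set" where
  "developed_transversal c = shift c ` base_triple i0"

lemma base_triple_subset: "i \<in> I \<Longrightarrow> base_triple i \<subseteq> cyclic_points k m"
  unfolding base_triple_def using base_in by blast

lemma inj_on_base: "i \<in> I \<Longrightarrow> inj_on (base i) {..<3}"
  using base_inj by (simp add: inj_on_def)

lemma card_base_triple: "i \<in> I \<Longrightarrow> card (base_triple i) = 3"
  unfolding base_triple_def by (simp add: card_image inj_on_base)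

lemma base_triples_disjoint:
  assumes "i \<in> I" "i' \<in> I" "i \<noteq> i'"
  shows "base_triple i \<inter> base_triple i' = {}"
proof -
  have "base i s \<noteq> base i' s'" if "s < 3" "s' < 3" for s s'
    using base_inj[OF assms(1,2) that] assms(3) by blast
  then show ?thesis
    unfolding base_triple_def by fastforce
qed

lemma base_triples_cover: "(\<Union>i\<in>I. base_triple i) = cyclic_points k m"
proof -
  have "(\<Union>i\<in>I. base_triple i) = (\<lambda>(i, s). base i s) ` (I \<times> {..<3})"
    unfolding base_triple_def by auto
  moreover have "inj_on (\<lambda>(i, s). base i s) (I \<times> {..<3})"
    using base_inj by (auto simp: inj_on_def)
  ultimately have "card (\<Union>i\<in>I. base_triple i) = card (cyclic_points k m)"
    using finite_I card_I card_cyclic_points[OF k_pos m_pos] by (simp add: card_image card_cartesian_product)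
  moreover have "(\<Union>i\<in>I. base_triple i) \<subseteq> cyclic_points k m"
    using base_triple_subset by blast
  ultimately show ?thesis
    using card_subset_eq[OF finite_cyclic_points] by presburger
qed

lemma shift_eq_shift_imp_eq:
  assumes "shift c p = shift c' p" "c < nat (k * m)" "c' < nat (k * m)"
  shows "c = c'"
  using translate_eq_translate_imp_eq[OF assms(1)] group_elem_in[OF k_pos m_pos] assms(2,3)
    inj_group_elem[OF m_pos] by (meson injD)

lemma shifted_triples_meet:
  assumes c: "c < nat (k * m)" "c' < nat (k * m)" and i: "i \<in> I" "i' \<in> I"
    and y: "y1 \<in> shift c ` base_triple i \<inter> shift c' ` base_triple i'"
      "y2 \<in> shift c ` base_triple i \<inter> shift c' ` base_triple i'" "y1 \<noteq> y2"
  shows "c = c' \<and> i = i'"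
proof -
  obtain s1 s2 s1' s2' where s: "s1 < 3" "s2 < 3" "s1' < 3" "s2' < 3"
    and y1: "y1 = shift c (base i s1)" "y1 = shift c' (base i' s1')"
    and y2: "y2 = shift c (base i s2)" "y2 = shift c' (base i' s2')"
    using y(1,2) unfolding base_triple_def by auto
  have "s1 \<noteq> s2" "s1' \<noteq> s2'"
    using y(3) y1 y2 by auto
  moreover have "difference k m (base i s1) (base i s2) = difference k m (base i' s1') (base i' s2')"
    using y1 y2 difference_translate by metis
  ultimately have "i = i'" "s1 = s1'"
    using difference_inj[OF i s] by auto
  then show ?thesis
    using y1 shift_eq_shift_imp_eq c by metis
qed

lemma shifted_transversals_meet:
  assumes "c < nat (k * m)" "c' < nat (k * m)"
    and "y \<in> shift c ` base_triple i0 \<inter> shift c' ` base_triple i0"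
  shows "c = c'"
proof -
  obtain s s' where s: "s < 3" "s' < 3" "y = shift c (base i0 s)" "y = shift c' (base i0 s')"
    using assms(3) unfolding base_triple_def by auto
  then have "s = s'"
    using i0_levels level_translate by metis
  then show ?thesis
    using s shift_eq_shift_imp_eq assms(1,2) by metis
qed

lemma inj_on_shift: "inj_on (shift c) (cyclic_points k m)"
  by (rule inj_on_translate)

lemma resolvable_developed:
  "resolvable_triples (cyclic_points k m) developed_class developed_transversal (nat (k * m))"
proof
  show "finite (cyclic_points k m)" "card (cyclic_points k m) = 3 * nat (k * m)"
    using finite_cyclic_points card_cyclic_points k_pos m_pos by auto
next
  fix c T assume "c < nat (k * m)" "T \<in> developed_class c"
  then obtain i where i: "i \<in> I" "T = shift c ` base_triple i"
    unfolding developed_class_def by blast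
  then show "T \<subseteq> cyclic_points k m"
    using base_triple_subset translate_in_cyclic_points k_pos m_pos by blast
  show "card T = 3"
    using i card_base_triple inj_on_subset[OF inj_on_shift base_triple_subset] by (simp add: card_image)
next
  fix c assume "c < nat (k * m)"
  have "\<Union>(developed_class c) = shift c ` (\<Union>i\<in>I. base_triple i)"
    unfolding developed_class_def by blast
  then show "\<Union>(developed_class c) = cyclic_points k m"
    using base_triples_cover translate_cyclic_points k_pos m_pos by simp
next
  fix c T T' assume "c < nat (k * m)" "T \<in> developed_class c" "T' \<in> developed_class c" "T \<noteq> T'"
  then obtain i i' where "i \<in> I" "i' \<in> I" "i \<noteq> i'"
    and "T = shift c ` base_triple i" "T' = shift c ` base_triple i'"
    unfolding developed_class_def by blast
  then show "T \<inter> T' = {}"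
    using base_triples_disjoint inj_on_image_Int[OF inj_on_shift base_triple_subset base_triple_subset]
    by (metis image_empty)
next
  fix c c' T T'
  assume c: "c < nat (k * m)" "c' < nat (k * m)" and T: "T \<in> developed_class c" "T' \<in> developed_class c'"
    and ne: "(c, T) \<noteq> (c', T')"
  obtain i i' where i: "i \<in> I" "i' \<in> I" "T = shift c ` base_triple i" "T' = shift c' ` base_triple i'"
    using T unfolding developed_class_def by blast
  have "finite (T \<inter> T')"
    using i by (simp add: base_triple_def)
  moreover have "y1 = y2" if "y1 \<in> T \<inter> T'" "y2 \<in> T \<inter> T'" for y1 y2
    using shifted_triples_meet[OF c i(1,2)] that i(3,4) ne by blast
  ultimately show "card (T \<inter> T') \<le> 1"
    by (simp add: card_le_Suc0_iff_eq)
next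
  fix c assume "c < nat (k * m)"
  show "developed_transversal c \<in> developed_class c"
    unfolding developed_transversal_def developed_class_def using i0_in by blast
next
  fix c c' assume "c < nat (k * m)" "c' < nat (k * m)" "c \<noteq> c'"
  then show "developed_transversal c \<inter> developed_transversal c' = {}"
    unfolding developed_transversal_def using shifted_transversals_meet by blast
qed

lemma resolvable_triples_exist: "resolvable_triples_exist (nat (k * m))"
  using resolvable_developed by (rule resolvable_triples_existI)

end

lemma distinct_concat_nth_eq:
  assumes "distinct (concat xss)" "i < length xss" "i' < length xss"
    and "s < length (xss ! i)" "s' < length (xss ! i')" "xss ! i ! s = xss ! i' ! s'"
  shows "i = i' \<and> s = s'"
  using assms
proof (induction xss arbitrary: i i')
  case Nil
  then show ?case by simp
next
  case (Cons xs xss)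
  have in_tail: "xss ! j ! t \<in> set (concat xss)" if "j < length xss" "t < length (xss ! j)" for j t
    using that by (metis UN_I nth_mem set_concat)
  show ?case
  proof (cases i; cases i')
    assume "i = 0" "i' = 0"
    then show ?thesis
      using Cons.prems by (simp add: nth_eq_iff_index_eq)
  next
    fix j' assume "i = 0" "i' = Suc j'"
    then show ?thesis
      using Cons.prems in_tail[of j' s'] nth_mem[of s xs] by (auto simp: disjoint_iff)
  next
    fix j assume "i = Suc j" "i' = 0"
    then show ?thesis
      using Cons.prems in_tail[of j s] nth_mem[of s' xs] by (auto simp: disjoint_iff)
  next
    fix j j' assume "i = Suc j" "i' = Suc j'"
    then show ?thesis
      using Cons.prems Cons.IH[of j j'] by simp
  qed
qed

definition ordered_pairs :: "(nat \<times> nat) list" where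
  "ordered_pairs = [(0, 1), (1, 0), (0, 2), (2, 0), (1, 2), (2, 1)]"

lemma mem_ordered_pairs: "(s, t) \<in> set ordered_pairs \<longleftrightarrow> s < 3 \<and> t < 3 \<and> s \<noteq> t"
  unfolding ordered_pairs_def by (auto simp: less_Suc_eq numeral_3_eq_3)

lemma ordered_pairs_complete:
  assumes "s < 3" "t < 3" "s \<noteq> t"
  obtains r where "r < length ordered_pairs" "ordered_pairs ! r = (s, t)"
  using assms mem_ordered_pairs by (metis in_set_conv_nth)

lemma distinct_ordered_pairs: "distinct ordered_pairs"
  unfolding ordered_pairs_def by simp

definition starter_certificate :: "int \<Rightarrow> int \<Rightarrow> point list list \<Rightarrow> bool" where
  "starter_certificate k m L \<longleftrightarrow>
     length L = nat (k * m) \<and> (\<forall>T\<in>set L. length T = 3) \<and>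
     (\<forall>p\<in>set (concat L). p \<in> cyclic_points k m) \<and> distinct (concat L) \<and>
     distinct (concat (map (\<lambda>T. map (\<lambda>(s, t). difference k m (T ! s) (T ! t)) ordered_pairs) L)) \<and>
     (\<exists>T\<in>set L. distinct (map level T))"

lemma starter_certificate_starter:
  assumes cert: "starter_certificate k m L" and "k > 0" "m > 0" "i0 < length L"
    and "distinct (map level (L ! i0))"
  shows "starter k m {..<length L} (\<lambda>i s. L ! i ! s) i0"
proof
  show "k > 0" "m > 0" "finite {..<length L}" "i0 \<in> {..<length L}"
    using assms by auto
  show "card {..<length L} = nat (k * m)"
    using cert unfolding starter_certificate_def by simp
next
  fix i and s :: nat assume "i \<in> {..<length L}" "s < 3"
  then have "L ! i \<in> set L" "s < length (L ! i)"
    using cert unfolding starter_certificate_def by auto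
  then have "L ! i ! s \<in> set (concat L)"
    by (metis UN_I nth_mem set_concat)
  then show "L ! i ! s \<in> cyclic_points k m"
    using cert unfolding starter_certificate_def by blast
next
  fix i i' and s s' :: nat assume "i \<in> {..<length L}" "i' \<in> {..<length L}" "s < 3" "s' < 3" "L ! i ! s = L ! i' ! s'"
  then show "i = i' \<and> s = s'"
    using cert distinct_concat_nth_eq[of L i i' s s'] unfolding starter_certificate_def by simp
next
  fix i i' and s t s' t' :: nat
  assume i: "i \<in> {..<length L}" "i' \<in> {..<length L}" and st: "s < 3" "t < 3" "s' < 3" "t' < 3" "s \<noteq> t" "s' \<noteq> t'"
    and eq: "difference k m (L ! i ! s) (L ! i ! t) = difference k m (L ! i' ! s') (L ! i' ! t')"
  obtain r r' where r: "r < length ordered_pairs" "ordered_pairs ! r = (s, t)"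
    and r': "r' < length ordered_pairs" "ordered_pairs ! r' = (s', t')"
    using ordered_pairs_complete st by metis
  let ?D = "map (\<lambda>T. map (\<lambda>(s, t). difference k m (T ! s) (T ! t)) ordered_pairs) L"
  have "?D ! i ! r = ?D ! i' ! r'"
    using i r r' eq by simp
  then have "i = i' \<and> r = r'"
    using cert i r r' distinct_concat_nth_eq[of ?D i i' r r'] unfolding starter_certificate_def by simp
  then show "i = i' \<and> s = s' \<and> t = t'"
    using r r' by simp
next
  fix s t :: nat assume st: "s < 3" "t < 3" "level (L ! i0 ! s) = level (L ! i0 ! t)"
  have "length (L ! i0) = 3"
    using assms(4) cert unfolding starter_certificate_def by simp
  then show "s = t"
    using st assms(5) nth_eq_iff_index_eq[of "map level (L ! i0)" s t] by simp
qed

lemma starter_certificate_exist: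
  assumes "starter_certificate k m L" "k > 0" "m > 0"
  shows "resolvable_triples_exist (nat (k * m))"
proof -
  obtain i0 where "i0 < length L" "distinct (map level (L ! i0))"
    using assms(1) unfolding starter_certificate_def by (metis in_set_conv_nth)
  then have "starter k m {..<length L} (\<lambda>i s. L ! i ! s) i0"
    using starter_certificate_starter assms by blast
  then show ?thesis
    by (rule starter.resolvable_triples_exist)
qed

definition starter6 :: "point list list" where
  "starter6 = [[(0,0,0),(0,0,1),(0,0,2)], [(0,5,1),(0,4,1),(0,3,0)], [(0,3,1),(0,2,2),(0,1,1)], [(0,4,2),(0,5,2),(0,1,0)], [(0,2,0),(0,3,2),(0,1,2)], [(0,5,0),(0,2,1),(0,4,0)]]"

definition starter8 :: "point list list" where
  "starter8 = [[(0,0,0),(0,0,1),(0,0,2)], [(0,6,1),(0,7,0),(0,5,0)], [(0,1,2),(0,4,2),(0,3,0)], [(0,6,0),(0,2,2),(0,4,1)], [(0,3,1),(0,1,0),(0,5,1)], [(0,6,2),(0,4,0),(0,7,1)], [(0,5,2),(0,2,0),(0,7,2)], [(0,2,1),(0,3,2),(0,1,1)]]"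

definition starter10 :: "point list list" where
  "starter10 = [[(0,0,0),(0,0,1),(0,0,2)], [(0,3,0),(0,8,1),(0,5,0)], [(0,7,1),(0,9,2),(0,6,0)], [(0,7,0),(0,3,2),(0,4,2)], [(0,6,2),(0,2,0),(0,1,1)], [(0,4,1),(0,8,0),(0,7,2)], [(0,5,2),(0,9,1),(0,8,2)], [(0,1,2),(0,9,0),(0,3,1)], [(0,4,0),(0,2,2),(0,1,0)], [(0,5,1),(0,6,1),(0,2,1)]]"

definition starter12 :: "point list list" where
  "starter12 = [[(0,0,0),(0,0,1),(0,0,2)], [(0,7,1),(0,5,0),(0,2,2)], [(0,2,1),(0,6,2),(0,1,2)], [(0,9,1),(0,8,0),(0,7,2)], [(0,10,1),(0,7,0),(0,2,0)], [(0,5,1),(0,1,0),(0,8,2)], [(0,9,2),(0,4,0),(0,10,2)], [(0,10,0),(0,8,1),(0,11,0)], [(0,1,1),(0,11,1),(0,4,1)], [(0,11,2),(0,3,2),(0,6,1)], [(0,4,2),(0,3,0),(0,6,0)], [(0,3,1),(0,9,0),(0,5,2)]]"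

definition starter14 :: "point list list" where
  "starter14 = [[(0,0,0),(0,0,1),(0,0,2)], [(0,8,2),(0,7,2),(0,2,1)], [(0,11,0),(0,6,0),(0,12,1)], [(0,5,2),(0,9,1),(0,11,1)], [(0,9,2),(0,7,0),(0,3,2)], [(0,6,1),(0,9,0),(0,10,2)], [(0,4,1),(0,1,1),(0,2,0)], [(0,7,1),(0,2,2),(0,4,2)], [(0,12,0),(0,8,0),(0,1,2)], [(0,5,0),(0,13,2),(0,4,0)], [(0,1,0),(0,13,1),(0,3,0)], [(0,10,0),(0,3,1),(0,13,0)], [(0,11,2),(0,6,2),(0,8,1)], [(0,12,2),(0,5,1),(0,10,1)]]"

definition starter15 :: "point list list" where
  "starter15 = [[(0,0,0),(0,0,1),(0,0,2)], [(0,1,0),(0,14,1),(0,7,2)], [(0,4,2),(0,12,0),(0,5,1)], [(0,9,2),(0,10,0),(0,8,2)], [(0,6,1),(0,14,0),(0,13,1)], [(0,11,0),(0,14,2),(0,13,0)], [(0,7,0),(0,12,2),(0,3,0)], [(0,13,2),(0,3,1),(0,10,2)], [(0,11,2),(0,8,1),(0,5,2)], [(0,6,0),(0,3,2),(0,1,2)], [(0,5,0),(0,2,0),(0,11,1)], [(0,9,0),(0,8,0),(0,10,1)], [(0,6,2),(0,4,1),(0,2,2)], [(0,12,1),(0,2,1),(0,1,1)], [(0,4,0),(0,7,1),(0,9,1)]]"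

definition starter18 :: "point list list" where
  "starter18 = [[(0,0,0),(0,0,1),(0,0,2)], [(0,11,1),(0,8,2),(0,9,0)], [(0,12,0),(0,9,2),(0,13,1)], [(0,4,2),(0,14,0),(0,5,2)], [(0,7,2),(0,15,0),(0,13,0)], [(0,15,1),(0,2,1),(0,10,2)], [(0,7,0),(0,5,1),(0,6,1)], [(0,5,0),(0,17,0),(0,10,0)], [(0,2,2),(0,1,1),(0,16,0)], [(0,1,0),(0,16,1),(0,2,0)], [(0,15,2),(0,17,2),(0,10,1)], [(0,17,1),(0,11,2),(0,9,1)], [(0,4,0),(0,14,1),(0,8,1)], [(0,6,2),(0,3,1),(0,1,2)], [(0,11,0),(0,16,2),(0,12,2)], [(0,3,0),(0,6,0),(0,12,1)], [(0,14,2),(0,3,2),(0,8,0)], [(0,13,2),(0,4,1),(0,7,1)]]"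

definition starter21 :: "point list list" where
  "starter21 = [[(0,0,0),(0,0,1),(0,0,2)], [(0,11,2),(0,5,0),(0,14,2)], [(0,20,1),(0,7,1),(0,2,1)], [(0,3,0),(0,7,0),(0,1,2)], [(0,18,2),(0,15,0),(0,17,1)], [(0,12,1),(0,14,0),(0,6,2)], [(0,16,2),(0,17,0),(0,5,1)], [(0,6,1),(0,9,2),(0,4,1)], [(0,2,2),(0,4,2),(0,11,1)], [(0,7,2),(0,9,1),(0,10,1)], [(0,8,1),(0,9,0),(0,19,0)], [(0,12,0),(0,4,0),(0,6,0)], [(0,15,2),(0,13,1),(0,8,0)], [(0,19,2),(0,10,2),(0,2,0)], [(0,1,0),(0,18,1),(0,13,2)], [(0,19,1),(0,11,0),(0,16,0)], [(0,20,2),(0,10,0),(0,5,2)], [(0,20,0),(0,17,2),(0,3,2)], [(0,15,1),(0,18,0),(0,1,1)], [(0,14,1),(0,13,0),(0,3,1)], [(0,16,1),(0,8,2),(0,12,2)]]"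

definition starter22 :: "point list list" where
  "starter22 = [[(0,0,0),(0,0,1),(0,0,2)], [(0,4,2),(0,21,0),(0,12,1)], [(0,14,1),(0,16,2),(0,13,0)], [(0,8,2),(0,5,1),(0,10,1)], [(0,7,0),(0,19,1),(0,15,2)], [(0,20,1),(0,9,0),(0,16,0)], [(0,2,1),(0,11,2),(0,18,0)], [(0,6,1),(0,10,0),(0,17,2)], [(0,1,1),(0,13,1),(0,8,0)], [(0,14,2),(0,3,0),(0,20,0)], [(0,11,1),(0,19,2),(0,5,2)], [(0,7,2),(0,13,2),(0,9,2)], [(0,11,0),(0,14,0),(0,1,2)], [(0,4,1),(0,3,2),(0,10,2)], [(0,7,1),(0,3,1),(0,5,0)], [(0,12,0),(0,2,0),(0,4,0)], [(0,1,0),(0,17,0),(0,9,1)], [(0,15,0),(0,18,1),(0,6,2)], [(0,21,1),(0,15,1),(0,8,1)], [(0,12,2),(0,2,2),(0,17,1)], [(0,16,1),(0,6,0),(0,20,2)], [(0,18,2),(0,21,2),(0,19,0)]]"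

definition starter26 :: "point list list" where
  "starter26 = [[(0,0,0),(0,0,1),(0,0,2)], [(0,5,1),(0,24,0),(0,22,0)], [(0,14,1),(0,4,0),(0,17,2)], [(0,11,1),(0,23,2),(0,12,1)], [(0,11,0),(0,17,1),(0,1,1)], [(0,25,2),(0,3,2),(0,5,0)], [(0,11,2),(0,24,1),(0,19,0)], [(0,16,1),(0,18,1),(0,22,1)], [(0,1,0),(0,4,2),(0,13,0)], [(0,18,0),(0,2,0),(0,21,0)], [(0,8,0),(0,7,0),(0,15,2)], [(0,5,2),(0,12,0),(0,10,1)], [(0,14,2),(0,4,1),(0,9,2)], [(0,2,2),(0,19,2),(0,1,2)], [(0,24,2),(0,9,0),(0,8,1)], [(0,14,0),(0,18,2),(0,25,1)], [(0,10,0),(0,16,0),(0,12,2)], [(0,15,0),(0,19,1),(0,7,1)], [(0,6,1),(0,8,2),(0,9,1)], [(0,15,1),(0,6,2),(0,20,0)], [(0,21,1),(0,3,1),(0,10,2)], [(0,25,0),(0,3,0),(0,13,2)], [(0,20,2),(0,2,1),(0,23,1)], [(0,23,0),(0,20,1),(0,6,0)], [(0,22,2),(0,16,2),(0,17,0)], [(0,7,2),(0,13,1),(0,21,2)]]"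

definition starter27 :: "point list list" where
  "starter27 = [[(0,0,0),(0,0,1),(0,0,2)], [(0,24,0),(0,15,2),(0,8,2)], [(0,21,1),(0,15,1),(0,10,0)], [(0,26,0),(0,2,1),(0,20,1)], [(0,21,2),(0,22,0),(0,3,1)], [(0,9,0),(0,1,0),(0,14,0)], [(0,22,2),(0,4,2),(0,18,1)], [(0,17,1),(0,10,1),(0,13,0)], [(0,6,2),(0,23,1),(0,12,1)], [(0,11,0),(0,25,1),(0,12,0)], [(0,8,0),(0,4,1),(0,10,2)], [(0,23,0),(0,26,2),(0,6,0)], [(0,14,1),(0,13,2),(0,1,2)], [(0,7,1),(0,2,2),(0,5,0)], [(0,12,2),(0,20,2),(0,7,2)], [(0,5,2),(0,16,0),(0,18,0)], [(0,7,0),(0,17,2),(0,19,1)], [(0,9,2),(0,21,0),(0,11,2)], [(0,2,0),(0,1,1),(0,25,2)], [(0,15,0),(0,24,2),(0,8,1)], [(0,19,2),(0,23,2),(0,16,1)], [(0,25,0),(0,13,1),(0,3,2)], [(0,3,0),(0,19,0),(0,9,1)], [(0,20,0),(0,18,2),(0,17,0)], [(0,16,2),(0,11,1),(0,24,1)], [(0,4,0),(0,26,1),(0,22,1)], [(0,5,1),(0,14,2),(0,6,1)]]"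

lemma starter_certificate_instances:
  "starter_certificate 1 6 starter6"
  "starter_certificate 1 8 starter8"
  "starter_certificate 1 10 starter10"
  "starter_certificate 1 12 starter12"
  "starter_certificate 1 14 starter14"
  "starter_certificate 1 15 starter15"
  "starter_certificate 1 18 starter18"
  "starter_certificate 1 21 starter21"
  "starter_certificate 1 22 starter22"
  "starter_certificate 1 26 starter26"
  "starter_certificate 1 27 starter27"
  by code_simp+

lemma resolvable_triples_exist_sporadic:
  assumes "n \<in> {6, 8, 10, 12, 14, 15, 18, 21, 22, 26, 27}"
  shows "resolvable_triples_exist n"
proof -
  have "resolvable_triples_exist (nat (int m))" if "starter_certificate 1 (int m) L" "m > 0" for m L
    using starter_certificate_exist[OF that(1)] that(2) by simp
  then show ?thesis
    using assms starter_certificate_instances by auto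
qed

locale orthogonal_array =
  fixes b :: nat and col :: "nat \<Rightarrow> nat \<Rightarrow> nat \<Rightarrow> nat" and t :: "nat \<Rightarrow> nat"
  assumes col_range: "j < 3 \<Longrightarrow> c < b \<Longrightarrow> x < b \<Longrightarrow> col j c x < b"
    and col_inj: "j < 3 \<Longrightarrow> c < b \<Longrightarrow> x < b \<Longrightarrow> x' < b \<Longrightarrow> col j c x = col j c x' \<Longrightarrow> x = x'"
    and col_orthogonal: "j1 < 3 \<Longrightarrow> j2 < 3 \<Longrightarrow> j1 \<noteq> j2 \<Longrightarrow> c < b \<Longrightarrow> x < b \<Longrightarrow> c' < b \<Longrightarrow> x' < b \<Longrightarrow>
      col j1 c x = col j1 c' x' \<Longrightarrow> col j2 c x = col j2 c' x' \<Longrightarrow> c = c' \<and> x = x'"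
    and parallel_range: "c < b \<Longrightarrow> t c < b"
    and parallel_disjoint: "j < 3 \<Longrightarrow> c < b \<Longrightarrow> c' < b \<Longrightarrow> col j c (t c) = col j c' (t c') \<Longrightarrow> c = c'"
begin

lemma col_surj:
  assumes "j < 3" "c < b" "z < b"
  obtains x where "x < b" "col j c x = z"
proof -
  have "inj_on (col j c) {..<b}"
    using col_inj assms by (simp add: inj_on_def)
  moreover have "col j c ` {..<b} \<subseteq> {..<b}"
    using col_range assms by auto
  ultimately have "col j c ` {..<b} = {..<b}"
    using endo_inj_surj[OF finite_lessThan] by blast
  then show ?thesis
    using that assms(3) by (metis imageE lessThan_iff)
qed

end

lemma orthogonal_arrayI:
  assumes "\<forall>j<3. \<forall>c<b. \<forall>x<b. col j c x < b"
    and "\<forall>j<3. \<forall>c<b. distinct (map (col j c) [0..<b])"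
    and "\<forall>j2<3. \<forall>j1<j2. distinct (map (\<lambda>(c, x). (col j1 c x, col j2 c x)) (List.product [0..<b] [0..<b]))"
    and "\<forall>c<b. t c < b"
    and "\<forall>j<3. distinct (map (\<lambda>c. col j c (t c)) [0..<b])"
  shows "orthogonal_array b col t"
proof
  fix j c x x' :: nat assume "j < 3" "c < b" "x < b"
  then show "col j c x < b"
    using assms(1) by blast
  assume "x' < b" "col j c x = col j c x'"
  moreover have "inj_on (col j c) {0..<b}"
    using assms(2) \<open>j < 3\<close> \<open>c < b\<close> by (simp add: distinct_map)
  ultimately show "x = x'"
    using \<open>x < b\<close> by (simp add: inj_on_def)
next
  have orth: "c = c' \<and> x = x'"
    if "j1 < j2" "j2 < 3" "c < b" "x < b" "c' < b" "x' < b"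
      "col j1 c x = col j1 c' x'" "col j2 c x = col j2 c' x'" for j1 j2 c x c' x'
  proof -
    have "inj_on (\<lambda>(c, x). (col j1 c x, col j2 c x)) ({0..<b} \<times> {0..<b})"
      using assms(3) that(1,2) by (simp add: distinct_map)
    then have "(c, x) = (c', x')"
      by (rule inj_onD) (use that(3-8) in auto)
    then show ?thesis
      by simp
  qed
  fix j1 j2 c x c' x' :: nat
  assume j: "j1 < 3" "j2 < 3" "j1 \<noteq> j2" and cx: "c < b" "x < b" "c' < b" "x' < b"
    and eq: "col j1 c x = col j1 c' x'" "col j2 c x = col j2 c' x'"
  consider "j1 < j2" | "j2 < j1"
    using j(3) by linarith
  then show "c = c' \<and> x = x'"
  proof cases
    case 1
    show ?thesis
      by (rule orth[OF 1 j(2) cx eq])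
  next
    case 2
    show ?thesis
      by (rule orth[OF 2 j(1) cx eq(2,1)])
  qed
next
  fix j c c' :: nat assume "j < 3" "c < b" "c' < b" "col j c (t c) = col j c' (t c')"
  moreover have "inj_on (\<lambda>c. col j c (t c)) {0..<b}"
    using assms(5) \<open>j < 3\<close> by (simp add: distinct_map)
  ultimately show "c = c'"
    by (simp add: inj_on_def)
qed (use assms(4) in blast)

definition triple_elem :: "'a :: linorder set \<Rightarrow> nat \<Rightarrow> 'a" where
  "triple_elem T j = sorted_list_of_set T ! j"

lemma bij_betw_triple_elem:
  assumes "finite T" "card T = 3"
  shows "bij_betw (triple_elem T) {..<3} T"
proof -
  let ?l = "sorted_list_of_set T"
  have l: "length ?l = 3" "set ?l = T" "distinct ?l"
    using assms by simp_all
  then have "inj_on ((!) ?l) {..<3}"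
    by (simp add: inj_on_def nth_eq_iff_index_eq)
  moreover have "(!) ?l ` {..<3} = T"
    using l by (metis atLeast_upt image_set map_nth lessThan_atLeast0)
  ultimately show ?thesis
    unfolding triple_elem_def bij_betw_def by simp
qed

locale product_construction = resolvable_triples Y C S a + orthogonal_array b col t
  for Y :: "'a :: linorder set" and C S a b col t
begin

definition lift :: "'a set \<Rightarrow> nat \<Rightarrow> nat \<Rightarrow> ('a \<times> nat) set" where
  "lift T c x = (\<lambda>j. (triple_elem T j, col j c x)) ` {..<3}"

definition product_class :: "nat \<Rightarrow> ('a \<times> nat) set set" where
  "product_class d = {lift T (d mod b) x | T x. T \<in> C (d div b) \<and> x < b}"

definition product_transversal :: "nat \<Rightarrow> ('a \<times> nat) set" where
  "product_transversal d = lift (S (d div b)) (d mod b) (t (d mod b))"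

lemma index_bounds:
  assumes "d < a * b"
  shows "d div b < a" "d mod b < b"
proof -
  have "b > 0"
    using assms by (cases b) auto
  then show "d div b < a" "d mod b < b"
    using assms by (simp_all add: less_mult_imp_div_less)
qed

lemma bij_betw_triple_elem_class: "i < a \<Longrightarrow> T \<in> C i \<Longrightarrow> bij_betw (triple_elem T) {..<3} T"
  by (simp add: bij_betw_triple_elem finite_triple card_triple)

lemma triple_elem_in: "i < a \<Longrightarrow> T \<in> C i \<Longrightarrow> j < 3 \<Longrightarrow> triple_elem T j \<in> T"
  using bij_betw_triple_elem_class by (meson bij_betwE lessThan_iff)

lemma triple_elem_eq_iff:
  "i < a \<Longrightarrow> T \<in> C i \<Longrightarrow> j < 3 \<Longrightarrow> j' < 3 \<Longrightarrow> triple_elem T j = triple_elem T j' \<longleftrightarrow> j = j'"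
  using bij_betw_triple_elem_class by (meson bij_betw_imp_inj_on inj_on_eq_iff lessThan_iff)

lemma mem_lift: "p \<in> lift T c x \<longleftrightarrow> (\<exists>j<3. p = (triple_elem T j, col j c x))"
  unfolding lift_def by auto

lemma lift_subset:
  assumes "i < a" "T \<in> C i" "c < b" "x < b"
  shows "lift T c x \<subseteq> Y \<times> {..<b}"
  using assms bij_betw_triple_elem_class[OF assms(1,2)] triple_subset[OF assms(1,2)] col_range
  unfolding lift_def bij_betw_def by auto

lemma card_lift:
  assumes "i < a" "T \<in> C i"
  shows "card (lift T c x) = 3"
proof -
  have "inj_on (\<lambda>j. (triple_elem T j, col j c x)) {..<3}"
    using bij_betw_triple_elem_class[OF assms] unfolding bij_betw_def inj_on_def by blast
  then show ?thesis
    unfolding lift_def by (simp add: card_image)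
qed

lemma lifts_meet:
  assumes i: "i < a" "T \<in> C i" "i' < a" "T' \<in> C i'"
    and cx: "c < b" "x < b" "c' < b" "x' < b"
    and p: "p \<in> lift T c x \<inter> lift T' c' x'" "p' \<in> lift T c x \<inter> lift T' c' x'" "p \<noteq> p'"
  shows "i = i' \<and> T = T' \<and> c = c' \<and> x = x'"
proof -
  obtain j1 j2 j1' j2' where j: "j1 < 3" "j2 < 3" "j1' < 3" "j2' < 3"
    and p1: "p = (triple_elem T j1, col j1 c x)" "p = (triple_elem T' j1', col j1' c' x')"
    and p2: "p' = (triple_elem T j2, col j2 c x)" "p' = (triple_elem T' j2', col j2' c' x')"
    using p(1,2) unfolding Int_iff mem_lift by blast
  have "j1 \<noteq> j2"
    using p(3) p1 p2 by auto
  then have "triple_elem T j1 \<noteq> triple_elem T j2"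
    using triple_elem_eq_iff i j by blast
  moreover have "triple_elem T j1 \<in> T \<inter> T'" "triple_elem T j2 \<in> T \<inter> T'"
    using triple_elem_in i j p1 p2 by (metis IntI prod.inject)+
  ultimately have "\<not> card (T \<inter> T') \<le> 1"
    using finite_triple[OF i(1,2)] by (auto simp: card_le_Suc0_iff_eq)
  then have same: "i = i'" "T = T'"
    using triples_meet[OF i(1,3,2,4)] by blast+
  then have "j1 = j1'" "j2 = j2'"
    using triple_elem_eq_iff i j p1 p2 by auto
  then have "c = c' \<and> x = x'"
    using col_orthogonal[OF j(1,2) \<open>j1 \<noteq> j2\<close> cx] p1 p2 by simp
  then show ?thesis
    using same by simp
qed

lemma lifts_disjoint_in_class:
  assumes "i < a" "T \<in> C i" "T' \<in> C i" "c < b" "x < b" "x' < b"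
    and "p \<in> lift T c x \<inter> lift T' c x'"
  shows "T = T' \<and> x = x'"
proof -
  obtain j j' where j: "j < 3" "j' < 3"
    and p: "p = (triple_elem T j, col j c x)" "p = (triple_elem T' j', col j' c x')"
    using assms(7) unfolding Int_iff mem_lift by blast
  then have "fst p \<in> T \<inter> T'"
    using triple_elem_in assms(1-3) by (metis IntI fst_conv)
  then have "T = T'"
    using class_disjoint assms(1-3) by blast
  then have "j = j'"
    using triple_elem_eq_iff assms(1,2) j p by auto
  then show ?thesis
    using col_inj[OF j(1) assms(4-6)] p \<open>T = T'\<close> by simp
qed

lemma lifted_transversals_meet:
  assumes "i < a" "i' < a" "c < b" "c' < b"
    and "p \<in> lift (S i) c (t c) \<inter> lift (S i') c' (t c')"
  shows "i = i' \<and> c = c'"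
proof -
  obtain j j' where j: "j < 3" "j' < 3"
    and p: "p = (triple_elem (S i) j, col j c (t c))" "p = (triple_elem (S i') j', col j' c' (t c'))"
    using assms(5) unfolding Int_iff mem_lift by blast
  then have "fst p \<in> S i \<inter> S i'"
    using triple_elem_in transversal_in_class assms(1,2) by (metis IntI fst_conv)
  then have "i = i'"
    using transversal_disjoint assms(1,2) by blast
  then have "j = j'"
    using triple_elem_eq_iff transversal_in_class assms(1) j p by auto
  then show ?thesis
    using parallel_disjoint[OF j(1) assms(3,4)] p \<open>i = i'\<close> by simp
qed

lemma resolvable_product: "resolvable_triples (Y \<times> {..<b}) product_class product_transversal (a * b)"
proof
  show "finite (Y \<times> {..<b})" "card (Y \<times> {..<b}) = 3 * (a * b)"
    using finite_points card_points by (simp_all add: card_cartesian_product)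
next
  fix d B assume d: "d < a * b" and "B \<in> product_class d"
  then obtain T x where T: "T \<in> C (d div b)" "x < b" "B = lift T (d mod b) x"
    unfolding product_class_def by blast
  then show "B \<subseteq> Y \<times> {..<b}" "card B = 3"
    using index_bounds[OF d] lift_subset card_lift by blast+
next
  fix d assume d: "d < a * b"
  show "\<Union>(product_class d) = Y \<times> {..<b}"
  proof
    show "\<Union>(product_class d) \<subseteq> Y \<times> {..<b}"
      using index_bounds[OF d] lift_subset unfolding product_class_def by blast
  next
    show "Y \<times> {..<b} \<subseteq> \<Union>(product_class d)"
    proof clarify
      fix y z assume "y \<in> Y" "z < b"
      then obtain T where T: "T \<in> C (d div b)" "y \<in> T"
        using class_cover index_bounds[OF d] by blast
      then obtain j where j: "j < 3" "triple_elem T j = y"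
        using bij_betw_triple_elem_class index_bounds[OF d] by (metis bij_betw_iff_bijections lessThan_iff)
      obtain x where "x < b" "col j (d mod b) x = z"
        using col_surj j(1) index_bounds[OF d] \<open>z < b\<close> by blast
      then have "(y, z) \<in> lift T (d mod b) x"
        using j unfolding mem_lift by blast
      then show "(y, z) \<in> \<Union>(product_class d)"
        unfolding product_class_def using T(1) \<open>x < b\<close> by blast
    qed
  qed
next
  fix d B B' assume d: "d < a * b" and "B \<in> product_class d" "B' \<in> product_class d" "B \<noteq> B'"
  then obtain T x T' x' where "T \<in> C (d div b)" "x < b" "B = lift T (d mod b) x"
    and "T' \<in> C (d div b)" "x' < b" "B' = lift T' (d mod b) x'"
    unfolding product_class_def by blast
  then show "B \<inter> B' = {}"
    using lifts_disjoint_in_class index_bounds[OF d] \<open>B \<noteq> B'\<close> by blast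
next
  fix d d' B B' assume d: "d < a * b" "d' < a * b" and "B \<in> product_class d" "B' \<in> product_class d'"
    and ne: "(d, B) \<noteq> (d', B')"
  then obtain T x T' x' where T: "T \<in> C (d div b)" "x < b" "B = lift T (d mod b) x"
    and T': "T' \<in> C (d' div b)" "x' < b" "B' = lift T' (d' mod b) x'"
    unfolding product_class_def by blast
  have "d = d' \<and> B = B'" if "p \<in> B \<inter> B'" "p' \<in> B \<inter> B'" "p \<noteq> p'" for p p'
  proof -
    have "d div b = d' div b \<and> T = T' \<and> d mod b = d' mod b \<and> x = x'"
      using lifts_meet index_bounds[OF d(1)] index_bounds[OF d(2)] T T' that by blast
    then show ?thesis
      using T T' by (metis div_mult_mod_eq)
  qed
  moreover have "finite (B \<inter> B')"
    using T by (simp add: lift_def)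
  ultimately show "card (B \<inter> B') \<le> 1"
    using ne by (auto simp: card_le_Suc0_iff_eq)
next
  fix d assume "d < a * b"
  then show "product_transversal d \<in> product_class d"
    unfolding product_transversal_def product_class_def
    using index_bounds transversal_in_class parallel_range by blast
next
  fix d d' assume d: "d < a * b" "d' < a * b" "d \<noteq> d'"
  show "product_transversal d \<inter> product_transversal d' = {}"
  proof (rule ccontr)
    assume "product_transversal d \<inter> product_transversal d' \<noteq> {}"
    then have "d div b = d' div b \<and> d mod b = d' mod b"
      unfolding product_transversal_def
      using lifted_transversals_meet index_bounds[OF d(1)] index_bounds[OF d(2)] by blast
    then show False
      using d(3) by (metis div_mult_mod_eq)
  qed
qed

end


lemma resolvable_triples_exist_mult:
  assumes "resolvable_triples_exist a" "orthogonal_array b col t"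
  shows "resolvable_triples_exist (a * b)"
proof -
  obtain Y :: "nat set" and C S where "resolvable_triples Y C S a"
    using assms(1) unfolding resolvable_triples_exist_def by blast
  then interpret product_construction Y C S a b col t
    using assms(2) by (simp add: product_construction_def)
  show ?thesis
    using resolvable_product by (rule resolvable_triples_existI)
qed


text \<open>Linear orthogonal arrays: column \<open>j\<close> is \<open>x + \<lambda>\<^sub>j c\<close> for distinct \<open>\<lambda>\<^sub>0, \<lambda>\<^sub>1, \<lambda>\<^sub>2\<close>
  and the parallel rows are \<open>x = \<mu> c\<close>; this needs all \<open>\<lambda>\<^sub>i - \<lambda>\<^sub>j\<close> and \<open>\<mu> + \<lambda>\<^sub>j\<close> to be
  units. Below \<open>\<lambda> = (0, 1, \<omega>)\<close>, \<open>\<mu> = \<omega> + 1\<close> in GF(4) (elements encoded by their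
  coordinate bits over GF(2)), \<open>\<lambda> = (0, 1, -i)\<close>, \<open>\<mu> = -i\<close> in GF(9) = \<open>\<int>\<^sub>3[i]\<close>
  (\<open>a i + b\<close> encoded as \<open>3 a + b\<close>), and \<open>\<lambda> = (0, 1, 2)\<close>, \<open>\<mu> = 1\<close> in \<open>\<int>\<^sub>m\<close>.\<close>

definition gf4_add :: "nat \<Rightarrow> nat \<Rightarrow> nat" where
  "gf4_add x y = [[0, 1, 2, 3], [1, 0, 3, 2], [2, 3, 0, 1], [3, 2, 1, 0]] ! x ! y"

definition oa4_col :: "nat \<Rightarrow> nat \<Rightarrow> nat \<Rightarrow> nat" where
  "oa4_col j c x = gf4_add x ([[0, 0, 0, 0], [0, 1, 2, 3], [0, 2, 3, 1]] ! j ! c)"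

definition oa4_parallel :: "nat \<Rightarrow> nat" where
  "oa4_parallel c = [0, 3, 1, 2] ! c"

lemma orthogonal_array_4: "orthogonal_array 4 oa4_col oa4_parallel"
  by (rule orthogonal_arrayI) code_simp+

definition gf9_add :: "nat \<Rightarrow> nat \<Rightarrow> nat" where
  "gf9_add x y = [[0, 1, 2, 3, 4, 5, 6, 7, 8], [1, 2, 0, 4, 5, 3, 7, 8, 6], [2, 0, 1, 5, 3, 4, 8, 6, 7],
     [3, 4, 5, 6, 7, 8, 0, 1, 2], [4, 5, 3, 7, 8, 6, 1, 2, 0], [5, 3, 4, 8, 6, 7, 2, 0, 1],
     [6, 7, 8, 0, 1, 2, 3, 4, 5], [7, 8, 6, 1, 2, 0, 4, 5, 3], [8, 6, 7, 2, 0, 1, 5, 3, 4]] ! x ! y"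

definition oa9_col :: "nat \<Rightarrow> nat \<Rightarrow> nat \<Rightarrow> nat" where
  "oa9_col j c x = gf9_add x ([[0, 0, 0, 0, 0, 0, 0, 0, 0], [0, 1, 2, 3, 4, 5, 6, 7, 8],
     [0, 6, 3, 1, 7, 4, 2, 8, 5]] ! j ! c)"

definition oa9_parallel :: "nat \<Rightarrow> nat" where
  "oa9_parallel c = [0, 6, 3, 1, 7, 4, 2, 8, 5] ! c"

lemma orthogonal_array_9: "orthogonal_array 9 oa9_col oa9_parallel"
  by (rule orthogonal_arrayI) code_simp+


lemma mod_eq_imp_eq_if_close:
  fixes m u v :: int
  assumes "u mod m = v mod m" "\<bar>u - v\<bar> < m"
  shows "u = v"
proof (rule ccontr)
  assume "u \<noteq> v"
  moreover have "m dvd u - v"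
    using assms(1) by (simp add: mod_eq_dvd_iff)
  ultimately have "\<bar>m\<bar> \<le> \<bar>u - v\<bar>"
    using dvd_imp_le_int by simp
  then show False
    using assms(2) by linarith
qed

lemma coprime_mult_mod_cancel:
  fixes m l u v :: int
  assumes "coprime m l" "(l * u) mod m = (l * v) mod m" "\<bar>u - v\<bar> < m"
  shows "u = v"
proof -
  have "m dvd l * (u - v)"
    using assms(2) by (simp add: mod_eq_dvd_iff right_diff_distrib)
  then have "u mod m = v mod m"
    using assms(1) by (simp add: coprime_dvd_mult_right_iff mod_eq_dvd_iff)
  then show ?thesis
    using assms(3) by (rule mod_eq_imp_eq_if_close)
qed

lemma coprime_6_imp:
  fixes m :: int
  assumes "coprime m 6"
  shows "coprime m 2" "coprime m 3"
  using assms coprime_mult_right_iff[of m 2 3] by simp_all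

lemma nat_mod_eq_iff_int: "(a :: nat) mod m = b mod m \<longleftrightarrow> int a mod int m = int b mod int m"
  by (metis of_nat_eq_iff zmod_int)

definition linear_col :: "nat \<Rightarrow> nat \<Rightarrow> nat \<Rightarrow> nat \<Rightarrow> nat" where
  "linear_col m j c x = (x + j * c) mod m"

lemma orthogonal_array_linear:
  assumes "coprime (int m) 6" "m > 0"
  shows "orthogonal_array m (linear_col m) (\<lambda>c. c)"
proof -
  have unit: "coprime (int m) d" if "d \<in> {1, 2, 3, -1, -2}" for d
    using that coprime_6_imp[OF assms(1)] by auto
  have small: "\<bar>int y - int y'\<bar> < int m" if "y < m" "y' < m" for y y'
    using that by linarith
  show ?thesis
proof (unfold_locales)
  fix j c x x' :: nat
  show "linear_col m j c x < m"
    using assms(2) unfolding linear_col_def by simp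
  assume "j < 3" "c < m" "x < m" "x' < m" "linear_col m j c x = linear_col m j c x'"
  then have "(int x + int j * int c) mod int m = (int x' + int j * int c) mod int m"
    unfolding linear_col_def nat_mod_eq_iff_int by simp
  then have "int x mod int m = int x' mod int m"
    by (simp add: mod_add_right_cancel)
  then have "int x = int x'"
    using small[OF \<open>x < m\<close> \<open>x' < m\<close>] by (rule mod_eq_imp_eq_if_close)
  then show "x = x'"
    by simp
next
  fix j1 j2 c x c' x' :: nat
  assume j: "j1 < 3" "j2 < 3" "j1 \<noteq> j2" and cx: "c < m" "x < m" "c' < m" "x' < m"
    and eq: "linear_col m j1 c x = linear_col m j1 c' x'" "linear_col m j2 c x = linear_col m j2 c' x'"
  have e: "(int x + int j1 * int c) mod int m = (int x' + int j1 * int c') mod int m"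
    "(int x + int j2 * int c) mod int m = (int x' + int j2 * int c') mod int m"
    using eq unfolding linear_col_def nat_mod_eq_iff_int by simp_all
  have "((int x + int j2 * int c) - (int x + int j1 * int c)) mod int m =
      ((int x' + int j2 * int c') - (int x' + int j1 * int c')) mod int m"
    by (rule mod_diff_cong[OF e(2) e(1)])
  then have "((int j2 - int j1) * int c) mod int m = ((int j2 - int j1) * int c') mod int m"
    by (simp add: algebra_simps)
  moreover have "int j2 - int j1 \<in> {1, 2, 3, -1, -2}"
    using j by auto
  ultimately have "int c = int c'"
    using coprime_mult_mod_cancel unit small[OF cx(1,3)] by blast
  moreover from this have "int x mod int m = int x' mod int m"
    using e(1) by (simp add: mod_add_right_cancel)
  then have "int x = int x'"
    using small[OF cx(2,4)] by (rule mod_eq_imp_eq_if_close)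
  ultimately show "c = c' \<and> x = x'"
    by simp
next
  fix j c c' :: nat
  assume "j < 3" "c < m" "c' < m" "linear_col m j c c = linear_col m j c' c'"
  then have "((1 + int j) * int c) mod int m = ((1 + int j) * int c') mod int m"
    unfolding linear_col_def nat_mod_eq_iff_int by (simp add: algebra_simps)
  moreover have "1 + int j \<in> {1, 2, 3, -1, -2}"
    using \<open>j < 3\<close> by auto
  ultimately have "int c = int c'"
    using coprime_mult_mod_cancel unit small[OF \<open>c < m\<close> \<open>c' < m\<close>] by blast
  then show "c = c'"
    by simp
qed
qed

definition small_units :: "int list" where
  "small_units = [1, -1, 2, -2, 3, -3, 4, -4, 6, -6, 8, -8, 9, -9, 12, -12]"

abbreviation zm_part :: "point \<Rightarrow> int" where
  "zm_part p \<equiv> fst (snd p)"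

definition zm_diff :: "point list \<Rightarrow> nat \<Rightarrow> nat \<Rightarrow> int" where
  "zm_diff T s t = zm_part (T ! t) - zm_part (T ! s)"

definition pattern_class :: "int \<Rightarrow> point \<Rightarrow> point \<Rightarrow> int \<times> int \<times> int" where
  "pattern_class k p q = (level p, level q, (fst q - fst p) mod k)"

definition allowed_difference :: "int \<Rightarrow> point list list \<Rightarrow> nat list \<Rightarrow> int \<times> int \<times> int \<Rightarrow> int \<Rightarrow> bool" where
  "allowed_difference k F R cl d \<longleftrightarrow> d = 0 \<or>
     (\<exists>f\<in>set R. \<exists>(s, t)\<in>set ordered_pairs.
        pattern_class k (F ! f ! s) (F ! f ! t) = cl \<and> zm_diff (F ! f) s t = d) \<or>
     (\<forall>T\<in>set F. \<forall>(s, t)\<in>set ordered_pairs. pattern_class k (T ! s) (T ! t) = cl \<longrightarrow>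
        d \<in> (\<lambda>v. - v * zm_diff T s t) ` {1, 2, 3})"

definition multiplier_certificate ::
  "int \<Rightarrow> int \<Rightarrow> point list list \<Rightarrow> nat list \<Rightarrow> point list list \<Rightarrow> bool" where
  "multiplier_certificate k B F R Cp \<longleftrightarrow>
     length F = nat (2 * k) \<and> (\<forall>T\<in>set F. length T = 3) \<and>
     (\<forall>p\<in>set (concat F).
        0 \<le> fst p \<and> fst p < k \<and> 0 \<le> level p \<and> level p < 3 \<and> zm_part p \<in> set small_units) \<and>
     (\<forall>f<length F. \<forall>s<3. \<forall>f'<length F. \<forall>s'<3.
        (f, s) \<noteq> (f', s') \<and> fst (F ! f ! s) = fst (F ! f' ! s') \<and> level (F ! f ! s) = level (F ! f' ! s')
        \<longrightarrow> zm_part (F ! f' ! s') = - zm_part (F ! f ! s)) \<and>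
     (\<forall>T\<in>set F. \<forall>(s, t)\<in>set ordered_pairs. zm_diff T s t \<in> set small_units) \<and>
     (\<forall>f<length F. \<forall>(s, t)\<in>set ordered_pairs. \<forall>f'<length F. \<forall>(s', t')\<in>set ordered_pairs.
        (f, s, t) \<noteq> (f', s', t') \<and>
        pattern_class k (F ! f ! s) (F ! f ! t) = pattern_class k (F ! f' ! s') (F ! f' ! t')
        \<longrightarrow> zm_diff (F ! f') s' t' = - zm_diff (F ! f) s t) \<and>
     distinct R \<and> (\<forall>f\<in>set R. f < length F) \<and>
     length Cp = nat k + length R \<and> (\<forall>T\<in>set Cp. length T = 3) \<and>
     (\<forall>p\<in>set (concat Cp). 0 \<le> fst p \<and> fst p < k \<and> 0 \<le> level p \<and> level p < 3 \<and> \<bar>zm_part p\<bar> \<le> B) \<and>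
     distinct (concat Cp) \<and>
     (\<forall>p\<in>set (concat Cp). zm_part p = 0 \<or> (\<exists>f\<in>set R. p \<in> set (F ! f))) \<and>
     distinct (concat (map (\<lambda>T. map (\<lambda>(s, t).
        (pattern_class k (T ! s) (T ! t), zm_diff T s t)) ordered_pairs) Cp)) \<and>
     (\<forall>T\<in>set Cp. \<forall>(s, t)\<in>set ordered_pairs.
        allowed_difference k F R (pattern_class k (T ! s) (T ! t)) (zm_diff T s t)) \<and>
     (\<exists>T\<in>set Cp. distinct (map level T))"

definition patterns2 :: "point list list" where
  "patterns2 = [[(0, 1, 0), (0, -1, 1), (1, -3, 2)], [(0, -1, 0), (0, -2, 2), (1, -4, 1)],
     [(0, 1, 1), (0, 2, 2), (1, -2, 0)], [(1, 2, 0), (1, 4, 1), (1, 3, 2)]]"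

definition extra2 :: "point list list" where
  "extra2 = [[(0, 0, 0), (0, 1, 0), (1, -2, 0)], [(0, 0, 1), (0, 0, 2), (1, 0, 0)],
     [(1, 0, 1), (0, 1, 1), (0, 2, 2)], [(1, 0, 2), (1, -3, 2), (0, -2, 2)],
     [(0, -1, 1), (0, -1, 0), (1, -4, 1)]]"

lemma multiplier_certificate_2: "multiplier_certificate 2 4 patterns2 [0, 1, 2] extra2"
  by code_simp

definition patterns3 :: "point list list" where
  "patterns3 = [[(0, 1, 0), (0, -1, 1), (2, 2, 0)], [(0, -1, 0), (0, 1, 1), (2, -2, 0)],
     [(0, 1, 2), (1, -1, 0), (2, 2, 2)], [(0, -1, 2), (1, 1, 0), (2, -2, 2)],
     [(1, 1, 1), (1, -1, 2), (2, 2, 1)], [(1, -1, 1), (1, 1, 2), (2, -2, 1)]]"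

definition extra3 :: "point list list" where
  "extra3 = [[(0, 0, 0), (0, 0, 1), (0, 0, 2)], [(1, 0, 0), (2, 0, 0), (1, 1, 0)],
     [(1, 0, 1), (2, 0, 2), (2, -2, 2)], [(1, 0, 2), (0, -1, 1), (2, 2, 0)],
     [(2, 0, 1), (0, 1, 0), (0, -1, 2)]]"

lemma multiplier_certificate_3: "multiplier_certificate 3 2 patterns3 [0, 3] extra3"
  by code_simp


lemma coprime_small_unit:
  assumes "coprime m 6" "x \<in> set small_units"
  shows "coprime m x"
proof -
  have "coprime m 2" "coprime m 3"
    using coprime_6_imp[OF assms(1)] by auto
  then have "coprime m (2 * 2)" "coprime m (2 * 2 * 2)" "coprime m (3 * 3)" "coprime m (2 * 2 * 3)"
    by (metis coprime_mult_right_iff)+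
  then show ?thesis
    using assms \<open>coprime m 2\<close> \<open>coprime m 3\<close> unfolding small_units_def by auto
qed

locale multiplier_family =
  fixes k m B :: int and F :: "point list list" and R :: "nat list" and Cp :: "point list list"
  assumes certificate: "multiplier_certificate k B F R Cp"
    and k_pos: "k > 0" and coprime_m: "coprime m 6" and m_ge: "m \<ge> 7" and B_small: "4 * B < m"
begin

definition h :: int where
  "h = (m - 1) div 2"

lemma two_h: "2 * h = m - 1"
proof -
  have "odd m"
    using coprime_6_imp(1)[OF coprime_m] by (simp add: coprime_commute)
  then obtain q where "m = 2 * q + 1"
    by (rule oddE)
  then show ?thesis
    unfolding h_def by simp
qed

lemma h_ge_3: "h \<ge> 3"
  using two_h m_ge by linarith

lemma multiples_eq:
  assumes "coprime m l" "1 \<le> u" "u \<le> h" "1 \<le> u'" "u' \<le> h" "(l * u) mod m = (l * u') mod m"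
  shows "u = u'"
proof -
  have "\<bar>u - u'\<bar> < m"
    using assms(2-5) two_h by linarith
  then show ?thesis
    by (rule coprime_mult_mod_cancel[OF assms(1,6)])
qed

lemma multiple_ne_neg_multiple:
  assumes "coprime m l" "1 \<le> u" "u \<le> h" "1 \<le> v" "v \<le> h"
  shows "(l * u) mod m \<noteq> (- l * v) mod m"
proof
  assume "(l * u) mod m = (- l * v) mod m"
  then have "(l * u) mod m = (l * (- v)) mod m"
    by simp
  moreover have "\<bar>u - - v\<bar> < m"
    using assms(2-5) two_h by linarith
  ultimately have "u = - v"
    by (rule coprime_mult_mod_cancel[OF assms(1)])
  then show False
    using assms(2,4) by simp
qed

lemma multiple_ne_zero:
  assumes "coprime m l" "1 \<le> u" "u \<le> h"
  shows "(l * u) mod m \<noteq> 0"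
proof
  assume "(l * u) mod m = 0"
  then have "(l * u) mod m = (l * 0) mod m"
    by simp
  moreover have "\<bar>u - 0\<bar> < m"
    using assms(2,3) two_h by linarith
  ultimately have "u = 0"
    by (rule coprime_mult_mod_cancel[OF assms(1)])
  then show False
    using assms(2) by simp
qed


lemma certificate_conjuncts:
  "length F = nat (2 * k)" "\<forall>T\<in>set F. length T = 3"
  "\<forall>p\<in>set (concat F).
     0 \<le> fst p \<and> fst p < k \<and> 0 \<le> level p \<and> level p < 3 \<and> zm_part p \<in> set small_units"
  "\<forall>f<length F. \<forall>s<3. \<forall>f'<length F. \<forall>s'<3.
     (f, s) \<noteq> (f', s') \<and> fst (F ! f ! s) = fst (F ! f' ! s') \<and> level (F ! f ! s) = level (F ! f' ! s')
     \<longrightarrow> zm_part (F ! f' ! s') = - zm_part (F ! f ! s)"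
  "\<forall>T\<in>set F. \<forall>(s, t)\<in>set ordered_pairs. zm_diff T s t \<in> set small_units"
  "\<forall>f<length F. \<forall>(s, t)\<in>set ordered_pairs. \<forall>f'<length F. \<forall>(s', t')\<in>set ordered_pairs.
     (f, s, t) \<noteq> (f', s', t') \<and>
     pattern_class k (F ! f ! s) (F ! f ! t) = pattern_class k (F ! f' ! s') (F ! f' ! t')
     \<longrightarrow> zm_diff (F ! f') s' t' = - zm_diff (F ! f) s t"
  "distinct R" "\<forall>f\<in>set R. f < length F"
  "length Cp = nat k + length R" "\<forall>T\<in>set Cp. length T = 3"
  "\<forall>p\<in>set (concat Cp). 0 \<le> fst p \<and> fst p < k \<and> 0 \<le> level p \<and> level p < 3 \<and> \<bar>zm_part p\<bar> \<le> B"
  "distinct (concat Cp)"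
  "\<forall>p\<in>set (concat Cp). zm_part p = 0 \<or> (\<exists>f\<in>set R. p \<in> set (F ! f))"
  "distinct (concat (map (\<lambda>T. map (\<lambda>(s, t).
     (pattern_class k (T ! s) (T ! t), zm_diff T s t)) ordered_pairs) Cp))"
  "\<forall>T\<in>set Cp. \<forall>(s, t)\<in>set ordered_pairs.
     allowed_difference k F R (pattern_class k (T ! s) (T ! t)) (zm_diff T s t)"
  "\<exists>T\<in>set Cp. distinct (map level T)"
  by (insert certificate, unfold multiplier_certificate_def, (elim conjE, assumption)+)

lemma removed_patterns: "distinct R" "f \<in> set R \<Longrightarrow> f < length F"
  using certificate_conjuncts(7,8) by auto

lemmas length_patterns = certificate_conjuncts(1)
lemmas length_extra = certificate_conjuncts(9)

lemma nth_in_concat: "i < length xss \<Longrightarrow> s < length (xss ! i) \<Longrightarrow> xss ! i ! s \<in> set (concat xss)"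
  by (metis UN_I nth_mem set_concat)

lemma pattern_entry:
  assumes "f < length F" "s < 3"
  shows "0 \<le> fst (F ! f ! s) \<and> fst (F ! f ! s) < k \<and> 0 \<le> level (F ! f ! s) \<and> level (F ! f ! s) < 3 \<and>
    zm_part (F ! f ! s) \<in> set small_units"
proof -
  have "length (F ! f) = 3"
    using assms(1) certificate_conjuncts(2) by simp
  then have "F ! f ! s \<in> set (concat F)"
    using assms by (intro nth_in_concat) simp_all
  then show ?thesis
    using certificate_conjuncts(3) by blast
qed

lemma pattern_entries_opposite:
  assumes "f < length F" "s < 3" "f' < length F" "s' < 3" "(f, s) \<noteq> (f', s')"
    and "fst (F ! f ! s) = fst (F ! f' ! s')" "level (F ! f ! s) = level (F ! f' ! s')"
  shows "zm_part (F ! f' ! s') = - zm_part (F ! f ! s)"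
  using certificate_conjuncts(4) assms by blast

lemma pattern_diff_unit:
  assumes "f < length F" "(s, t) \<in> set ordered_pairs"
  shows "zm_diff (F ! f) s t \<in> set small_units"
  using certificate_conjuncts(5) assms by (metis (no_types, lifting) case_prodD nth_mem)

lemma pattern_diffs_opposite:
  assumes "f < length F" "(s, t) \<in> set ordered_pairs" "f' < length F" "(s', t') \<in> set ordered_pairs"
    and "(f, s, t) \<noteq> (f', s', t')"
    and "pattern_class k (F ! f ! s) (F ! f ! t) = pattern_class k (F ! f' ! s') (F ! f' ! t')"
  shows "zm_diff (F ! f') s' t' = - zm_diff (F ! f) s t"
  using certificate_conjuncts(6) assms by fastforce

lemma extra_entry:
  assumes "c < length Cp" "s < 3"
  shows "0 \<le> fst (Cp ! c ! s) \<and> fst (Cp ! c ! s) < k \<and> 0 \<le> level (Cp ! c ! s) \<and> level (Cp ! c ! s) < 3 \<and>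
    \<bar>zm_part (Cp ! c ! s)\<bar> \<le> B \<and> (zm_part (Cp ! c ! s) = 0 \<or> (\<exists>f\<in>set R. Cp ! c ! s \<in> set (F ! f)))"
proof -
  have "length (Cp ! c) = 3"
    using assms(1) certificate_conjuncts(10) by simp
  then have "Cp ! c ! s \<in> set (concat Cp)"
    using assms by (intro nth_in_concat) simp_all
  then show ?thesis
    using certificate_conjuncts(11,13) by blast
qed

lemma extra_entries_distinct:
  assumes "c < length Cp" "s < 3" "c' < length Cp" "s' < 3" "Cp ! c ! s = Cp ! c' ! s'"
  shows "c = c' \<and> s = s'"
  using certificate_conjuncts(10,12) assms distinct_concat_nth_eq[of Cp c c' s s'] by simp

lemma extra_diffs_distinct:
  assumes "c < length Cp" "(s, t) \<in> set ordered_pairs" "c' < length Cp" "(s', t') \<in> set ordered_pairs"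
    and "pattern_class k (Cp ! c ! s) (Cp ! c ! t) = pattern_class k (Cp ! c' ! s') (Cp ! c' ! t')"
    and "zm_diff (Cp ! c) s t = zm_diff (Cp ! c') s' t'"
  shows "c = c' \<and> s = s' \<and> t = t'"
proof -
  obtain r r' where r: "r < length ordered_pairs" "ordered_pairs ! r = (s, t)"
    and r': "r' < length ordered_pairs" "ordered_pairs ! r' = (s', t')"
    using assms(2,4) by (metis in_set_conv_nth)
  let ?D = "map (\<lambda>T. map (\<lambda>(s, t). (pattern_class k (T ! s) (T ! t), zm_diff T s t)) ordered_pairs) Cp"
  have "?D ! c ! r = ?D ! c' ! r'"
    using assms r r' by simp
  then have "c = c' \<and> r = r'"
    using certificate_conjuncts(14) assms(1,3) r r' distinct_concat_nth_eq[of ?D c c' r r'] by simp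
  then show ?thesis
    using r r' by simp
qed

lemma extra_diff_allowed:
  assumes "c < length Cp" "(s, t) \<in> set ordered_pairs"
  shows "allowed_difference k F R (pattern_class k (Cp ! c ! s) (Cp ! c ! t)) (zm_diff (Cp ! c) s t)"
  using certificate_conjuncts(15) assms by (metis (no_types, lifting) case_prodD nth_mem)


lemma pattern_entry_unit: "f < length F \<Longrightarrow> s < 3 \<Longrightarrow> coprime m (zm_part (F ! f ! s))"
  using pattern_entry coprime_small_unit[OF coprime_m] by blast

lemma pattern_diff_coprime: "f < length F \<Longrightarrow> (s, t) \<in> set ordered_pairs \<Longrightarrow> coprime m (zm_diff (F ! f) s t)"
  using pattern_diff_unit coprime_small_unit[OF coprime_m] by blast

definition pattern_point :: "nat \<Rightarrow> int \<Rightarrow> nat \<Rightarrow> point" where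
  "pattern_point f u s = (fst (F ! f ! s), (zm_part (F ! f ! s) * u) mod m, level (F ! f ! s))"

definition extra_point :: "nat \<Rightarrow> nat \<Rightarrow> point" where
  "extra_point c s = (fst (Cp ! c ! s), zm_part (Cp ! c ! s) mod m, level (Cp ! c ! s))"

definition pattern_index :: "(nat \<times> int) set" where
  "pattern_index = {(f, u). f < length F \<and> 1 \<le> u \<and> u \<le> h \<and> \<not> (f \<in> set R \<and> u = 1)}"

definition base_index :: "(nat \<times> int + nat) set" where
  "base_index = Inl ` pattern_index \<union> Inr ` {..<length Cp}"

definition family_base :: "nat \<times> int + nat \<Rightarrow> nat \<Rightarrow> point" where
  "family_base i s = (case i of Inl (f, u) \<Rightarrow> pattern_point f u s | Inr c \<Rightarrow> extra_point c s)"

lemma finite_pattern_index: "finite pattern_index"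
  unfolding pattern_index_def by (rule finite_subset[of _ "{..<length F} \<times> {1..h}"]) auto

lemma card_base_index: "card base_index = nat (k * m)"
proof -
  have "pattern_index = {..<length F} \<times> {1..h} - (\<lambda>f. (f, 1)) ` set R"
    unfolding pattern_index_def by auto
  moreover have "(\<lambda>f. (f, 1)) ` set R \<subseteq> {..<length F} \<times> {1..h}"
    using removed_patterns(2) h_ge_3 by auto
  moreover have "card ((\<lambda>f. (f, 1 :: int)) ` set R) = length R"
    using removed_patterns(1) by (simp add: card_image inj_on_def distinct_card)
  ultimately have "card pattern_index = length F * nat h - length R"
    by (simp add: card_Diff_subset card_cartesian_product)
  moreover have "length R \<le> length F * nat h"
  proof -
    have "length R = card (set R)"
      using removed_patterns(1) by (simp add: distinct_card)
    also have "\<dots> \<le> card {..<length F}"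
      using removed_patterns(2) by (intro card_mono) auto
    also have "\<dots> \<le> length F * nat h"
    proof -
      have "1 \<le> nat h"
        using h_ge_3 by linarith
      then show ?thesis
        by simp
    qed
    finally show ?thesis .
  qed
  moreover have "card base_index = card pattern_index + length Cp"
  proof -
    have "card base_index = card (Inl ` pattern_index :: (nat \<times> int + nat) set) + card (Inr ` {..<length Cp} :: (nat \<times> int + nat) set)"
      unfolding base_index_def using finite_pattern_index by (intro card_Un_disjoint) auto
    then show ?thesis
      by (simp add: card_image)
  qed
  ultimately have "card base_index = length F * nat h - length R + length Cp"
    by simp
  also have "\<dots> = nat (2 * k) * nat h + nat k"
    using length_patterns length_extra \<open>length R \<le> length F * nat h\<close> by simp
  also have "\<dots> = nat (k * m)"
  proof -
    have "nat (2 * k) * nat h + nat k = nat (k * (2 * h + 1))"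
      using k_pos h_ge_3 by (simp add: nat_mult_distrib[symmetric] nat_add_distrib[symmetric] algebra_simps)
    then show ?thesis
      using two_h by simp
  qed
  finally show ?thesis .
qed


lemma pattern_point_in:
  assumes "f < length F" "s < 3"
  shows "pattern_point f u s \<in> cyclic_points k m"
  using pattern_entry[OF assms] m_ge unfolding pattern_point_def cyclic_points_def by simp

lemma extra_point_in:
  assumes "c < length Cp" "s < 3"
  shows "extra_point c s \<in> cyclic_points k m"
  using extra_entry[OF assms] m_ge unfolding extra_point_def cyclic_points_def by simp

lemma pattern_points_eq:
  assumes "(f, u) \<in> pattern_index" "(f', u') \<in> pattern_index" "s < 3" "s' < 3"
    and eq: "pattern_point f u s = pattern_point f' u' s'"
  shows "f = f' \<and> u = u' \<and> s = s'"
proof -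
  have i: "f < length F" "1 \<le> u" "u \<le> h" "f' < length F" "1 \<le> u'" "u' \<le> h"
    using assms(1,2) unfolding pattern_index_def by auto
  let ?l = "zm_part (F ! f ! s)"
  have same: "fst (F ! f ! s) = fst (F ! f' ! s')" "level (F ! f ! s) = level (F ! f' ! s')"
    and mod_eq: "(?l * u) mod m = (zm_part (F ! f' ! s') * u') mod m"
    using eq unfolding pattern_point_def by auto
  have unit: "coprime m ?l"
    using pattern_entry_unit i(1) assms(3) .
  show ?thesis
  proof (cases "(f, s) = (f', s')")
    case True
    then have "(?l * u) mod m = (?l * u') mod m"
      using mod_eq by simp
    then show ?thesis
      using True multiples_eq[OF unit i(2,3,5,6)] by simp
  next
    case False
    then have "zm_part (F ! f' ! s') = - ?l"
      using pattern_entries_opposite i(1,4) assms(3,4) same by blast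
    then show ?thesis
      using mod_eq multiple_ne_neg_multiple[OF unit i(2,3,5,6)] by (simp add: algebra_simps)
  qed
qed

lemma pattern_point_ne_extra_point:
  assumes "(f, u) \<in> pattern_index" "c < length Cp" "s < 3" "s' < 3"
  shows "pattern_point f u s \<noteq> extra_point c s'"
proof
  assume eq: "pattern_point f u s = extra_point c s'"
  have i: "f < length F" "1 \<le> u" "u \<le> h" "\<not> (f \<in> set R \<and> u = 1)"
    using assms(1) unfolding pattern_index_def by auto
  let ?l = "zm_part (F ! f ! s)"
  have unit: "coprime m ?l"
    using pattern_entry_unit i(1) assms(3) .
  have same: "fst (F ! f ! s) = fst (Cp ! c ! s')" "level (F ! f ! s) = level (Cp ! c ! s')"
    and mod_eq: "(?l * u) mod m = zm_part (Cp ! c ! s') mod m"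
    using eq unfolding pattern_point_def extra_point_def by auto
  consider "zm_part (Cp ! c ! s') = 0" | f0 where "f0 \<in> set R" "Cp ! c ! s' \<in> set (F ! f0)"
    using extra_entry[OF assms(2,4)] by blast
  then show False
  proof cases
    case 1
    then show False
      using mod_eq multiple_ne_zero[OF unit i(2,3)] by simp
  next
    case 2
    then obtain s0 where s0: "s0 < 3" "Cp ! c ! s' = F ! f0 ! s0"
      using removed_patterns(2) certificate_conjuncts(2) by (metis in_set_conv_nth nth_mem)
    have f0: "f0 < length F"
      using removed_patterns(2) 2(1) .
    show False
    proof (cases "(f, s) = (f0, s0)")
      case True
      then have "(?l * u) mod m = (?l * 1) mod m"
        using mod_eq s0 by simp
      then show False
        using multiples_eq[OF unit i(2,3)] h_ge_3 i(4) 2(1) True by simp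
    next
      case False
      then have "zm_part (F ! f0 ! s0) = - ?l"
        using pattern_entries_opposite i(1) f0 assms(3) s0 same by simp
      then show False
        using mod_eq s0 multiple_ne_neg_multiple[OF unit i(2,3), of 1] h_ge_3 by simp
    qed
  qed
qed

lemma extra_points_eq:
  assumes "c < length Cp" "c' < length Cp" "s < 3" "s' < 3" "extra_point c s = extra_point c' s'"
  shows "c = c' \<and> s = s'"
proof -
  have mod_eq: "zm_part (Cp ! c ! s) mod m = zm_part (Cp ! c' ! s') mod m"
    and same: "fst (Cp ! c ! s) = fst (Cp ! c' ! s')" "level (Cp ! c ! s) = level (Cp ! c' ! s')"
    using assms(5) unfolding extra_point_def by auto
  have "\<bar>zm_part (Cp ! c ! s) - zm_part (Cp ! c' ! s')\<bar> < m"
    using extra_entry[OF assms(1,3)] extra_entry[OF assms(2,4)] B_small by linarith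
  with mod_eq have "zm_part (Cp ! c ! s) = zm_part (Cp ! c' ! s')"
    by (rule mod_eq_imp_eq_if_close)
  then have "Cp ! c ! s = Cp ! c' ! s'"
    using same by (simp add: level_def prod_eq_iff)
  then show ?thesis
    using extra_entries_distinct assms(1-4) by blast
qed


lemma difference_pattern_points:
  "difference k m (pattern_point f u s) (pattern_point f u t) = difference k m (pattern_point f' u' s') (pattern_point f' u' t')
    \<longleftrightarrow> pattern_class k (F ! f ! s) (F ! f ! t) = pattern_class k (F ! f' ! s') (F ! f' ! t') \<and>
      (zm_diff (F ! f) s t * u) mod m = (zm_diff (F ! f') s' t' * u') mod m"
  unfolding difference_def pattern_point_def pattern_class_def zm_diff_def
  by (simp add: mod_diff_eq left_diff_distrib)

lemma difference_pattern_extra_points: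
  "difference k m (pattern_point f u s) (pattern_point f u t) = difference k m (extra_point c s') (extra_point c t')
    \<longleftrightarrow> pattern_class k (F ! f ! s) (F ! f ! t) = pattern_class k (Cp ! c ! s') (Cp ! c ! t') \<and>
      (zm_diff (F ! f) s t * u) mod m = zm_diff (Cp ! c) s' t' mod m"
  unfolding difference_def pattern_point_def extra_point_def pattern_class_def zm_diff_def
  by (simp add: mod_diff_eq left_diff_distrib)

lemma difference_extra_points:
  "difference k m (extra_point c s) (extra_point c t) = difference k m (extra_point c' s') (extra_point c' t')
    \<longleftrightarrow> pattern_class k (Cp ! c ! s) (Cp ! c ! t) = pattern_class k (Cp ! c' ! s') (Cp ! c' ! t') \<and>
      zm_diff (Cp ! c) s t mod m = zm_diff (Cp ! c') s' t' mod m"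
  unfolding difference_def extra_point_def pattern_class_def zm_diff_def
  by (simp add: mod_diff_eq)


lemma pattern_differences_eq:
  assumes "(f, u) \<in> pattern_index" "(f', u') \<in> pattern_index"
    and st: "(s, t) \<in> set ordered_pairs" "(s', t') \<in> set ordered_pairs"
    and "pattern_class k (F ! f ! s) (F ! f ! t) = pattern_class k (F ! f' ! s') (F ! f' ! t')"
    and mod_eq: "(zm_diff (F ! f) s t * u) mod m = (zm_diff (F ! f') s' t' * u') mod m"
  shows "f = f' \<and> u = u' \<and> s = s' \<and> t = t'"
proof -
  have i: "f < length F" "1 \<le> u" "u \<le> h" "f' < length F" "1 \<le> u'" "u' \<le> h"
    using assms(1,2) unfolding pattern_index_def by auto
  have unit: "coprime m (zm_diff (F ! f) s t)"
    using pattern_diff_coprime i(1) st(1) .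
  show ?thesis
  proof (cases "(f, s, t) = (f', s', t')")
    case True
    then show ?thesis
      using mod_eq multiples_eq[OF unit i(2,3,5,6)] by (simp add: mult.commute)
  next
    case False
    then have "zm_diff (F ! f') s' t' = - zm_diff (F ! f) s t"
      using pattern_diffs_opposite i(1,4) st assms(5) by blast
    then show ?thesis
      using mod_eq multiple_ne_neg_multiple[OF unit i(2,3,5,6)] by (simp add: algebra_simps)
  qed
qed

lemma pattern_difference_ne_extra_difference:
  assumes "(f, u) \<in> pattern_index" "c < length Cp"
    and st: "(s, t) \<in> set ordered_pairs" "(s', t') \<in> set ordered_pairs"
    and cl: "pattern_class k (F ! f ! s) (F ! f ! t) = pattern_class k (Cp ! c ! s') (Cp ! c ! t')"
  shows "(zm_diff (F ! f) s t * u) mod m \<noteq> zm_diff (Cp ! c) s' t' mod m"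
proof
  assume mod_eq: "(zm_diff (F ! f) s t * u) mod m = zm_diff (Cp ! c) s' t' mod m"
  have i: "f < length F" "1 \<le> u" "u \<le> h" "\<not> (f \<in> set R \<and> u = 1)"
    using assms(1) unfolding pattern_index_def by auto
  let ?\<mu> = "zm_diff (F ! f) s t" and ?d = "zm_diff (Cp ! c) s' t'"
  have unit: "coprime m ?\<mu>"
    using pattern_diff_coprime i(1) st(1) .
  have "allowed_difference k F R (pattern_class k (F ! f ! s) (F ! f ! t)) ?d"
    using extra_diff_allowed[OF assms(2) st(2)] cl by simp
  then show False
    unfolding allowed_difference_def
  proof (elim disjE)
    assume "?d = 0"
    then show False
      using mod_eq multiple_ne_zero[OF unit i(2,3)] by (simp add: mult.commute)
  next
    assume "\<exists>f0\<in>set R. \<exists>(s0, t0)\<in>set ordered_pairs.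
      pattern_class k (F ! f0 ! s0) (F ! f0 ! t0) = pattern_class k (F ! f ! s) (F ! f ! t) \<and>
      zm_diff (F ! f0) s0 t0 = ?d"
    then obtain f0 s0 t0 where f0: "f0 \<in> set R" "(s0, t0) \<in> set ordered_pairs"
      and cl0: "pattern_class k (F ! f0 ! s0) (F ! f0 ! t0) = pattern_class k (F ! f ! s) (F ! f ! t)"
      and d0: "zm_diff (F ! f0) s0 t0 = ?d"
      by blast
    show False
    proof (cases "(f, s, t) = (f0, s0, t0)")
      case True
      then have "(?\<mu> * u) mod m = (?\<mu> * 1) mod m"
        using mod_eq d0 by simp
      then show False
        using multiples_eq[OF unit i(2,3)] h_ge_3 i(4) f0(1) True by (simp add: mult.commute)
    next
      case False
      then have "zm_diff (F ! f0) s0 t0 = - ?\<mu>"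
        using pattern_diffs_opposite i(1) removed_patterns(2)[OF f0(1)] st(1) f0(2) cl0 by simp
      then show False
        using mod_eq d0 multiple_ne_neg_multiple[OF unit i(2,3), of 1] h_ge_3
        by (simp add: mult.commute)
    qed
  next
    assume "\<forall>T\<in>set F. \<forall>(a, b)\<in>set ordered_pairs.
      pattern_class k (T ! a) (T ! b) = pattern_class k (F ! f ! s) (F ! f ! t) \<longrightarrow>
      ?d \<in> (\<lambda>v. - v * zm_diff T a b) ` {1, 2, 3}"
    then have "?d \<in> (\<lambda>v. - v * ?\<mu>) ` {1, 2, 3}"
      using nth_mem[OF i(1)] st(1) by fastforce
    then obtain v where "v \<in> {1, 2, 3}" "?d = - v * ?\<mu>"
      by blast
    then show False
      using mod_eq multiple_ne_neg_multiple[OF unit i(2,3), of v] h_ge_3 by (auto simp: mult.commute)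
  qed
qed

lemma extra_differences_eq:
  assumes "c < length Cp" "c' < length Cp"
    and st: "(s, t) \<in> set ordered_pairs" "(s', t') \<in> set ordered_pairs"
    and cl: "pattern_class k (Cp ! c ! s) (Cp ! c ! t) = pattern_class k (Cp ! c' ! s') (Cp ! c' ! t')"
    and mod_eq: "zm_diff (Cp ! c) s t mod m = zm_diff (Cp ! c') s' t' mod m"
  shows "c = c' \<and> s = s' \<and> t = t'"
proof -
  have "s < 3" "t < 3" "s' < 3" "t' < 3"
    using st mem_ordered_pairs by auto
  then have "\<bar>zm_part (Cp ! c ! s)\<bar> \<le> B" "\<bar>zm_part (Cp ! c ! t)\<bar> \<le> B"
    "\<bar>zm_part (Cp ! c' ! s')\<bar> \<le> B" "\<bar>zm_part (Cp ! c' ! t')\<bar> \<le> B"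
    using extra_entry assms(1,2) by blast+
  then have "\<bar>zm_diff (Cp ! c) s t - zm_diff (Cp ! c') s' t'\<bar> < m"
    using B_small unfolding zm_diff_def by linarith
  with mod_eq have "zm_diff (Cp ! c) s t = zm_diff (Cp ! c') s' t'"
    by (rule mod_eq_imp_eq_if_close)
  then show ?thesis
    using extra_diffs_distinct assms(1,2) st cl by blast
qed


lemma starter_family:
  assumes "c0 < length Cp" "distinct (map level (Cp ! c0))"
  shows "starter k m base_index family_base (Inr c0)"
proof
  show "k > 0" "m > 0" "card base_index = nat (k * m)" "Inr c0 \<in> base_index"
    using k_pos m_ge card_base_index assms(1) unfolding base_index_def by auto
  show "finite base_index"
    unfolding base_index_def using finite_pattern_index by simp
next
  fix i and s :: nat assume "i \<in> base_index" "s < 3"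
  then show "family_base i s \<in> cyclic_points k m"
    unfolding base_index_def pattern_index_def family_base_def
    using pattern_point_in extra_point_in by auto
next
  fix i i' and s s' :: nat
  assume i: "i \<in> base_index" "i' \<in> base_index" and s: "s < 3" "s' < 3"
    and eq: "family_base i s = family_base i' s'"
  show "i = i' \<and> s = s'"
  proof (cases i; cases i')
    fix fu fu' assume "i = Inl fu" "i' = Inl fu'"
    moreover obtain f u f' u' where "fu = (f, u)" "fu' = (f', u')"
      by (cases fu, cases fu') auto
    ultimately show ?thesis
      using i s eq pattern_points_eq[of f u f' u' s s']
      unfolding base_index_def family_base_def by auto
  next
    fix fu c' assume "i = Inl fu" "i' = Inr c'"
    moreover obtain f u where "fu = (f, u)"
      by (cases fu) auto
    ultimately show ?thesis
      using i s eq pattern_point_ne_extra_point[of f u c' s s']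
      unfolding base_index_def family_base_def by auto
  next
    fix c fu' assume "i = Inr c" "i' = Inl fu'"
    moreover obtain f' u' where "fu' = (f', u')"
      by (cases fu') auto
    ultimately show ?thesis
      using i s eq pattern_point_ne_extra_point[of f' u' c s' s]
      unfolding base_index_def family_base_def by auto
  next
    fix c c' assume "i = Inr c" "i' = Inr c'"
    then show ?thesis
      using i s eq extra_points_eq[of c c' s s']
      unfolding base_index_def family_base_def by auto
  qed
next
  fix i i' and s t s' t' :: nat
  assume i: "i \<in> base_index" "i' \<in> base_index" and "s < 3" "t < 3" "s' < 3" "t' < 3" "s \<noteq> t" "s' \<noteq> t'"
    and eq: "difference k m (family_base i s) (family_base i t) = difference k m (family_base i' s') (family_base i' t')"
  then have st: "(s, t) \<in> set ordered_pairs" "(s', t') \<in> set ordered_pairs"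
    using mem_ordered_pairs by auto
  show "i = i' \<and> s = s' \<and> t = t'"
  proof (cases i; cases i')
    fix fu fu' assume "i = Inl fu" "i' = Inl fu'"
    moreover obtain f u f' u' where "fu = (f, u)" "fu' = (f', u')"
      by (cases fu, cases fu') auto
    ultimately show ?thesis
      using i st eq pattern_differences_eq[of f u f' u' s t s' t']
      unfolding base_index_def family_base_def by (auto simp: difference_pattern_points)
  next
    fix fu c' assume "i = Inl fu" "i' = Inr c'"
    moreover obtain f u where "fu = (f, u)"
      by (cases fu) auto
    ultimately show ?thesis
      using i st eq pattern_difference_ne_extra_difference[of f u c' s t s' t']
      unfolding base_index_def family_base_def by (auto simp: difference_pattern_extra_points)
  next
    fix c fu' assume "i = Inr c" "i' = Inl fu'"
    moreover obtain f' u' where "fu' = (f', u')"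
      by (cases fu') auto
    ultimately show ?thesis
      using i st eq[symmetric] pattern_difference_ne_extra_difference[of f' u' c s' t' s t]
      unfolding base_index_def family_base_def by (auto simp: difference_pattern_extra_points)
  next
    fix c c' assume "i = Inr c" "i' = Inr c'"
    then show ?thesis
      using i st eq extra_differences_eq[of c c' s t s' t']
      unfolding base_index_def family_base_def by (auto simp: difference_extra_points)
  qed
next
  fix s t :: nat assume "s < 3" "t < 3" "level (family_base (Inr c0) s) = level (family_base (Inr c0) t)"
  moreover have "length (Cp ! c0) = 3"
    using certificate_conjuncts(10) assms(1) by simp
  ultimately show "s = t"
    using assms(2) nth_eq_iff_index_eq[of "map level (Cp ! c0)" s t]
    unfolding family_base_def extra_point_def by (simp add: level_def)
qed

lemma resolvable_triples_exist: "resolvable_triples_exist (nat (k * m))"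
proof -
  obtain c0 where "c0 < length Cp" "distinct (map level (Cp ! c0))"
    using certificate_conjuncts(16) by (metis in_set_conv_nth)
  then have "starter k m base_index family_base (Inr c0)"
    by (rule starter_family)
  then show ?thesis
    by (rule starter.resolvable_triples_exist)
qed

end

lemma resolvable_triples_exist_1: "resolvable_triples_exist 1"
proof -
  have "resolvable_triples {0 :: nat, 1, 2} (\<lambda>_. {{0, 1, 2}}) (\<lambda>_. {0, 1, 2}) 1"
    by unfold_locales auto
  then show ?thesis
    by (rule resolvable_triples_existI)
qed

lemma resolvable_triples_exist_mult_coprime_6:
  assumes "resolvable_triples_exist a" "coprime (int m) 6" "m > 0"
  shows "resolvable_triples_exist (a * m)"
  using resolvable_triples_exist_mult[OF assms(1) orthogonal_array_linear[OF assms(2,3)]] .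

lemma resolvable_triples_exist_double:
  assumes "coprime (int m) 6" "m \<noteq> 1"
  shows "resolvable_triples_exist (2 * m)"
proof (cases "m > 16")
  case True
  interpret multiplier_family 2 "int m" 4 patterns2 "[0, 1, 2]" extra2
    using multiplier_certificate_2 assms True by unfold_locales auto
  show ?thesis
    using resolvable_triples_exist by (simp add: nat_mult_distrib)
next
  case False
  have "odd m" "\<not> 3 dvd m"
    using coprime_6_imp[OF assms(1)] by (auto simp: coprime_int_iff)
  then have "m \<noteq> 3" "m \<noteq> 9" "m \<noteq> 15"
    by auto
  with \<open>odd m\<close> assms(2) False have "m = 5 \<or> m = 7 \<or> m = 11 \<or> m = 13"
    by presburger
  then have "2 * m \<in> {6, 8, 10, 12, 14, 15, 18, 21, 22, 26, 27}"
    by auto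
  then show ?thesis
    by (rule resolvable_triples_exist_sporadic)
qed

lemma resolvable_triples_exist_triple:
  assumes "coprime (int m) 6" "m \<noteq> 1"
  shows "resolvable_triples_exist (3 * m)"
proof (cases "m > 8")
  case True
  interpret multiplier_family 3 "int m" 2 patterns3 "[0, 3]" extra3
    using multiplier_certificate_3 assms True by unfold_locales auto
  show ?thesis
    using resolvable_triples_exist by (simp add: nat_mult_distrib)
next
  case False
  have "odd m" "\<not> 3 dvd m"
    using coprime_6_imp[OF assms(1)] by (auto simp: coprime_int_iff)
  then have "m \<noteq> 3"
    by auto
  with \<open>odd m\<close> assms(2) False have "m = 5 \<or> m = 7"
    by presburger
  then have "3 * m \<in> {6, 8, 10, 12, 14, 15, 18, 21, 22, 26, 27}"
    by auto
  then show ?thesis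
    by (rule resolvable_triples_exist_sporadic)
qed


lemma coprime_6_iff: "coprime (int m) 6 \<longleftrightarrow> odd m \<and> \<not> 3 dvd m"
proof -
  have "prime (3 :: nat)"
    by simp
  then have "coprime m 3 \<longleftrightarrow> \<not> 3 dvd m"
    using prime_imp_coprime[of 3 m] by (auto simp: coprime_commute dest: coprime_common_divisor)
  moreover have "coprime m 6 \<longleftrightarrow> coprime m 2 \<and> coprime m 3"
    using coprime_mult_right_iff[of m 2 3] by simp
  moreover have "coprime (int m) 6 \<longleftrightarrow> coprime m 6"
    using coprime_int_iff[of m 6] by simp
  ultimately show ?thesis
    by (simp add: coprime_right_2_iff_odd)
qed

lemma coprime_6_decomposition:
  assumes "\<not> 4 dvd n" "\<not> 9 dvd n"
  obtains m where "coprime (int m) 6" "n = m \<or> n = 2 * m \<or> n = 3 * m \<or> n = 6 * m"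
proof -
  have "\<exists>m. odd m \<and> \<not> 3 dvd m \<and> (n = m \<or> n = 2 * m \<or> n = 3 * m \<or> n = 6 * m)"
  proof (cases "even n"; cases "3 dvd n")
    assume "even n" "3 dvd n"
    then have "6 dvd n"
      by presburger
    then obtain m where m: "n = 6 * m" ..
    then have "odd m" "\<not> 3 dvd m"
      using assms by presburger+
    with m show ?thesis
      by blast
  next
    assume "even n" "\<not> 3 dvd n"
    from \<open>even n\<close> obtain m where m: "n = 2 * m" ..
    then have "odd m" "\<not> 3 dvd m"
      using assms(1) \<open>\<not> 3 dvd n\<close> by presburger+
    with m show ?thesis
      by blast
  next
    assume "odd n" "3 dvd n"
    from \<open>3 dvd n\<close> obtain m where m: "n = 3 * m" ..
    then have "odd m" "\<not> 3 dvd m"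
      using assms(2) \<open>odd n\<close> by presburger+
    with m show ?thesis
      by blast
  next
    assume "odd n" "\<not> 3 dvd n"
    then show ?thesis
      by blast
  qed
  then show ?thesis
    using that coprime_6_iff by blast
qed

lemma resolvable_triples_exist_all:
  assumes "n > 0" "n \<noteq> 2" "n \<noteq> 3"
  shows "resolvable_triples_exist n"
  using assms
proof (induction n rule: less_induct)
  case (less n)
  have sporadic: "resolvable_triples_exist a" if "a \<in> {6, 8, 12, 18, 27}" for a
    using that resolvable_triples_exist_sporadic by blast
  consider (four) q where "n = q * 4" | (nine) q where "n = q * 9" | (coprime) "\<not> 4 dvd n" "\<not> 9 dvd n"
    by (metis dvd_def mult.commute)
  then show ?case
  proof cases
    case four
    show ?thesis
    proof (cases "q = 2 \<or> q = 3")
      case True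
      then have "n \<in> {6, 8, 12, 18, 27}"
        using four by auto
      then show ?thesis
        by (rule sporadic)
    next
      case False
      then have "resolvable_triples_exist q"
        using four less by simp
      then show ?thesis
        using four resolvable_triples_exist_mult[OF _ orthogonal_array_4] by simp
    qed
  next
    case nine
    show ?thesis
    proof (cases "q = 2 \<or> q = 3")
      case True
      then have "n \<in> {6, 8, 12, 18, 27}"
        using nine by auto
      then show ?thesis
        by (rule sporadic)
    next
      case False
      then have "resolvable_triples_exist q"
        using nine less by simp
      then show ?thesis
        using nine resolvable_triples_exist_mult[OF _ orthogonal_array_9] by simp
    qed
  next
    case coprime
    then obtain m where m: "coprime (int m) 6" "n = m \<or> n = 2 * m \<or> n = 3 * m \<or> n = 6 * m"
      by (rule coprime_6_decomposition)
    then have "m > 0"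
      using less.prems(1) by auto
    from m(2) show ?thesis
    proof (elim disjE)
      assume "n = m"
      then show ?thesis
        using resolvable_triples_exist_mult_coprime_6[OF resolvable_triples_exist_1 m(1) \<open>m > 0\<close>] by simp
    next
      assume "n = 2 * m"
      then show ?thesis
        using resolvable_triples_exist_double[OF m(1)] less.prems(2) by auto
    next
      assume "n = 3 * m"
      then show ?thesis
        using resolvable_triples_exist_triple[OF m(1)] less.prems(3) by auto
    next
      assume "n = 6 * m"
      then show ?thesis
        using resolvable_triples_exist_mult_coprime_6[OF sporadic[of 6] m(1) \<open>m > 0\<close>] by simp
    qed
  qed
qed

theorem theorem2p6:
  fixes n \<rho> :: nat
  assumes "n \<ge> 4" and "n \<noteq> 6" and "1 \<le> \<rho>" and "\<rho> \<le> n"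
  shows "\<exists>X (\<B> :: nat set set). is_packing (3*n + \<rho>) 4 X \<B> \<and>
           card \<B> = n * \<rho> + D \<rho> 4 \<and> largest_PPC_size \<B> \<rho>"
proof -
  obtain P where P: "is_packing \<rho> 4 {..<\<rho>} P" "card P = D \<rho> 4"
    using maximum_packing_exists[of \<rho> 4] by (auto simp: atLeast0LessThan)
  have "resolvable_triples_exist n"
    using assms(1) by (intro resolvable_triples_exist_all) auto
  then obtain C S where "resolvable_triples {\<rho>..<\<rho> + 3 * n} C S n"
    using resolvable_triples_on[of n "{\<rho>..<\<rho> + 3 * n}"] by auto
  then interpret packing_extension "{\<rho>..<\<rho> + 3 * n}" C S n \<rho> P
    using P(1) assms(4) by (auto simp: packing_extension_def packing_extension_axioms_def)
  show ?thesis
    using is_packing_extension card_extension largest_PPC_extension P(2) by auto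
qed

end
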